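(* Let $R$ be a complete local Noetherian commutative ring, $L$ an $R$-module (not necessarily finitely generated or Artinian), and $S \subseteq L$ a subset. Then for every pair $(N,M)$ of Matlis-dualizable $R$-modules with $N\subseteq M$, $\operatorname{tr}_{S,L}^{\mathrm{sd}}(N,M) = N_M^{\mathrm{cl}_{S,L}}$.
   Context: $E$ is the injective hull of the residue field and $(-)^\vee=\operatorname{Hom}_R(-,E)$. The $(S,L)$-trace is the absolute pair operation $\operatorname{tr}_{S,L}(N,M) := \sum_{f \in \operatorname{Hom}_R(L,N)} R f(S)$, the submodule of $N$ generated by $\{f(s)\mid f\in\operatorname{Hom}_R(L,N), s\in S\}$. The subset module closure is $N^{\mathrm{cl}_{S,L}}_M := \{u \in M \mid s \otimes u \in \operatorname{im}(L \otimes_R N \to L \otimes_R M) \text{ for all } s \in S\}$. Identifying $(M/N)^\vee$ with $\{g\in M^\vee\mid g(N)=0\}$ and letting $\eta_B:B\to B^{\vee\vee}$ be the Matlis duality isomorphism, the smile dual of a pair operation $p$ is $p^{\mathrm{sd}}(A,B) := \eta_B^{-1}\big((B^\vee / p((B/A)^\vee,B^\vee))^\vee\big)$; equivalently $x\in p^{\mathrm{sd}}(A,B)$ iff $g(x)=0$ for all $g\in p((B/A)^\vee,B^\vee)$. *)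

theory Defs
  imports "HOL-Algebra.Module" "HOL-Algebra.Ideal_Product" "HOL-Algebra.Ring_Divisibility"
begin

definition local_ring :: "('r, 'x) ring_scheme \<Rightarrow> bool" where
  "local_ring R \<longleftrightarrow> cring R \<and> (\<exists>!m. maximalideal m R)"

definition max_ideal :: "('r, 'x) ring_scheme \<Rightarrow> 'r set" where
  "max_ideal R = (THE m. maximalideal m R)"

primrec ideal_power :: "('r, 'x) ring_scheme \<Rightarrow> 'r set \<Rightarrow> nat \<Rightarrow> 'r set" where
  "ideal_power R I 0 = carrier R"
| "ideal_power R I (Suc n) = ideal_prod R (ideal_power R I n) I"

definition madic_complete :: "('r, 'x) ring_scheme \<Rightarrow> bool" where
  "madic_complete R \<longleftrightarrow>
     (let m = max_ideal R in
       (\<Inter>k. ideal_power R m k) = {\<zero>\<^bsub>R\<^esub>} \<and>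
       (\<forall>x::nat \<Rightarrow> 'r. (\<forall>n. x n \<in> carrier R) \<longrightarrow>
          (\<forall>k. \<exists>N. \<forall>p\<ge>N. \<forall>q\<ge>N. x p \<ominus>\<^bsub>R\<^esub> x q \<in> ideal_power R m k) \<longrightarrow>
          (\<exists>y\<in>carrier R. \<forall>k. \<exists>N. \<forall>n\<ge>N. y \<ominus>\<^bsub>R\<^esub> x n \<in> ideal_power R m k)))"

definition complete_local_noetherian :: "('r, 'x) ring_scheme \<Rightarrow> bool" where
  "complete_local_noetherian R \<longleftrightarrow>
     local_ring R \<and> noetherian_ring R \<and> madic_complete R"

definition hom_R :: "('r, 'x) ring_scheme \<Rightarrow> ('r, 'a) module \<Rightarrow> ('r, 'b) module \<Rightarrow> ('a \<Rightarrow> 'b) set" where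
  "hom_R R A B = {f. f \<in> carrier A \<rightarrow> carrier B \<and> f \<in> extensional (carrier A) \<and>
      (\<forall>x\<in>carrier A. \<forall>y\<in>carrier A. f (x \<oplus>\<^bsub>A\<^esub> y) = f x \<oplus>\<^bsub>B\<^esub> f y) \<and>
      (\<forall>a\<in>carrier R. \<forall>x\<in>carrier A. f (a \<odot>\<^bsub>A\<^esub> x) = a \<odot>\<^bsub>B\<^esub> f x)}"

definition ring_module :: "('r, 'x) ring_scheme \<Rightarrow> ('r, 'r) module" where
  "ring_module R = \<lparr>carrier = carrier R, monoid.mult = monoid.mult R, one = one R,
     zero = zero R, add = add R, smult = monoid.mult R\<rparr>"

text \<open>Injectivity of E (via Baer's criterion).\<close>
definition injective_module :: "('r, 'x) ring_scheme \<Rightarrow> ('r, 'e) module \<Rightarrow> bool" where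
  "injective_module R E \<longleftrightarrow>
     (\<forall>I. ideal I R \<longrightarrow>
        (\<forall>f\<in>hom_R R ((ring_module R)\<lparr>carrier := I\<rparr>) E.
           \<exists>g\<in>hom_R R (ring_module R) E. \<forall>x\<in>I. g x = f x))"

definition submod_gen :: "('r, 'x) ring_scheme \<Rightarrow> ('r, 'a) module \<Rightarrow> 'a set \<Rightarrow> 'a set" where
  "submod_gen R M X = \<Inter>{H. submodule H R M \<and> X \<subseteq> H}"

text \<open>E is an injective hull of the residue field k = R/m: E is injective and
  there is an essential embedding k \<rightarrow> E, i.e. an element e0 with annihilator m
  (so R e0 \<cong> R/m) such that every nonzero submodule of E meets R e0 nontrivially.\<close>
definition injective_hull_residue :: "('r, 'x) ring_scheme \<Rightarrow> ('r, 'e) module \<Rightarrow> bool" where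
  "injective_hull_residue R E \<longleftrightarrow> module R E \<and> injective_module R E \<and>
     (\<exists>e0\<in>carrier E.
        {a\<in>carrier R. a \<odot>\<^bsub>E\<^esub> e0 = \<zero>\<^bsub>E\<^esub>} = max_ideal R \<and>
        (\<forall>H. submodule H R E \<longrightarrow> H \<noteq> {\<zero>\<^bsub>E\<^esub>} \<longrightarrow>
           (\<exists>y\<in>H. y \<noteq> \<zero>\<^bsub>E\<^esub> \<and> y \<in> submod_gen R E {e0})))"

definition mdual :: "('r, 'x) ring_scheme \<Rightarrow> ('r, 'e) module \<Rightarrow> ('r, 'm) module \<Rightarrow> ('r, 'm \<Rightarrow> 'e) module" where
  "mdual R E M = \<lparr>carrier = hom_R R M E, monoid.mult = undefined, one = undefined,
     zero = (\<lambda>x\<in>carrier M. \<zero>\<^bsub>E\<^esub>),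
     add = (\<lambda>f g. \<lambda>x\<in>carrier M. f x \<oplus>\<^bsub>E\<^esub> g x),
     smult = (\<lambda>a f. \<lambda>x\<in>carrier M. a \<odot>\<^bsub>E\<^esub> f x)\<rparr>"

definition matlis_eta :: "('r, 'x) ring_scheme \<Rightarrow> ('r, 'e) module \<Rightarrow> ('r, 'm) module \<Rightarrow> 'm \<Rightarrow> (('m \<Rightarrow> 'e) \<Rightarrow> 'e)" where
  "matlis_eta R E M x = (\<lambda>g\<in>carrier (mdual R E M). g x)"

definition matlis_dualizable :: "('r, 'x) ring_scheme \<Rightarrow> ('r, 'e) module \<Rightarrow> ('r, 'm) module \<Rightarrow> bool" where
  "matlis_dualizable R E M \<longleftrightarrow> module R M \<and>
     bij_betw (matlis_eta R E M) (carrier M) (carrier (mdual R E (mdual R E M)))"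

text \<open>tr_{S,L}(N,M): submodule of N generated by f(s), f \<in> Hom_R(L,N), s \<in> S
  (N a submodule of the module M, given by its carrier set).\<close>
definition trace_SL :: "('r, 'x) ring_scheme \<Rightarrow> 'l set \<Rightarrow> ('r, 'l) module \<Rightarrow> 'n set \<Rightarrow> ('r, 'n) module \<Rightarrow> 'n set" where
  "trace_SL R S L N M = submod_gen R (M\<lparr>carrier := N\<rparr>)
      {f s | f s. f \<in> hom_R R L (M\<lparr>carrier := N\<rparr>) \<and> s \<in> S}"

text \<open>(B/A)^\<or> identified with {g \<in> B^\<or>. g(A) = 0}.\<close>
definition dual_quot :: "('r, 'x) ring_scheme \<Rightarrow> ('r, 'e) module \<Rightarrow> 'm set \<Rightarrow> ('r, 'm) module \<Rightarrow> ('m \<Rightarrow> 'e) set" where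
  "dual_quot R E A B = {g \<in> carrier (mdual R E B). \<forall>a\<in>A. g a = \<zero>\<^bsub>E\<^esub>}"

definition smile_dual ::
  "('r, 'x) ring_scheme \<Rightarrow> ('r, 'e) module \<Rightarrow>
   (('m \<Rightarrow> 'e) set \<Rightarrow> ('r, 'm \<Rightarrow> 'e) module \<Rightarrow> ('m \<Rightarrow> 'e) set) \<Rightarrow>
   'm set \<Rightarrow> ('r, 'm) module \<Rightarrow> 'm set" where
  "smile_dual R E p A B =
     {x \<in> carrier B. \<forall>g\<in>p (dual_quot R E A B) (mdual R E B). g x = \<zero>\<^bsub>E\<^esub>}"

text \<open>Tensor products, written out: L \<otimes> M is the free R-module on carrier L \<times> carrier M
  (finitely supported functions) modulo the bilinearity relations.\<close>
definition free_gen :: "('r, 'x) ring_scheme \<Rightarrow> 'l \<Rightarrow> 'm \<Rightarrow> ('l \<times> 'm \<Rightarrow> 'r)" where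
  "free_gen R l m = (\<lambda>p. if p = (l, m) then \<one>\<^bsub>R\<^esub> else \<zero>\<^bsub>R\<^esub>)"

inductive_set free_span :: "('r, 'x) ring_scheme \<Rightarrow> ('l \<times> 'm \<Rightarrow> 'r) set \<Rightarrow> ('l \<times> 'm \<Rightarrow> 'r) set"
  for R X where
  zero: "(\<lambda>p. \<zero>\<^bsub>R\<^esub>) \<in> free_span R X"
| gen: "v \<in> X \<Longrightarrow> v \<in> free_span R X"
| add: "v \<in> free_span R X \<Longrightarrow> w \<in> free_span R X \<Longrightarrow> (\<lambda>p. v p \<oplus>\<^bsub>R\<^esub> w p) \<in> free_span R X"
| smult: "a \<in> carrier R \<Longrightarrow> v \<in> free_span R X \<Longrightarrow> (\<lambda>p. a \<otimes>\<^bsub>R\<^esub> v p) \<in> free_span R X"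

definition tensor_relations :: "('r, 'x) ring_scheme \<Rightarrow> ('r, 'l) module \<Rightarrow> ('r, 'm) module \<Rightarrow> ('l \<times> 'm \<Rightarrow> 'r) set" where
  "tensor_relations R L M =
     {(\<lambda>p. free_gen R (l \<oplus>\<^bsub>L\<^esub> l') m p \<ominus>\<^bsub>R\<^esub> free_gen R l m p \<ominus>\<^bsub>R\<^esub> free_gen R l' m p)
        | l l' m. l \<in> carrier L \<and> l' \<in> carrier L \<and> m \<in> carrier M}
   \<union> {(\<lambda>p. free_gen R l (m \<oplus>\<^bsub>M\<^esub> m') p \<ominus>\<^bsub>R\<^esub> free_gen R l m p \<ominus>\<^bsub>R\<^esub> free_gen R l m' p)
        | l m m'. l \<in> carrier L \<and> m \<in> carrier M \<and> m' \<in> carrier M}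
   \<union> {(\<lambda>p. free_gen R (a \<odot>\<^bsub>L\<^esub> l) m p \<ominus>\<^bsub>R\<^esub> a \<otimes>\<^bsub>R\<^esub> free_gen R l m p)
        | a l m. a \<in> carrier R \<and> l \<in> carrier L \<and> m \<in> carrier M}
   \<union> {(\<lambda>p. free_gen R l (a \<odot>\<^bsub>M\<^esub> m) p \<ominus>\<^bsub>R\<^esub> a \<otimes>\<^bsub>R\<^esub> free_gen R l m p)
        | a l m. a \<in> carrier R \<and> l \<in> carrier L \<and> m \<in> carrier M}"

text \<open>s \<otimes> u \<in> im(L \<otimes> N \<rightarrow> L \<otimes> M): the class of the generator (s,u) lies in the
  span of the relations together with all generators (l,n), n \<in> N.\<close>
definition in_tensor_image :: "('r, 'x) ring_scheme \<Rightarrow> ('r, 'l) module \<Rightarrow> 'm set \<Rightarrow> ('r, 'm) module \<Rightarrow> 'l \<Rightarrow> 'm \<Rightarrow> bool" where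
  "in_tensor_image R L N M s u \<longleftrightarrow>
     free_gen R s u \<in> free_span R (tensor_relations R L M \<union>
        {free_gen R l n | l n. l \<in> carrier L \<and> n \<in> N})"

definition cl_SL :: "('r, 'x) ring_scheme \<Rightarrow> 'l set \<Rightarrow> ('r, 'l) module \<Rightarrow> 'm set \<Rightarrow> ('r, 'm) module \<Rightarrow> 'm set" where
  "cl_SL R S L N M = {u \<in> carrier M. \<forall>s\<in>S. in_tensor_image R L N M s u}"

end

theory Submission
  imports Defs
begin

(* Both sides are governed by the R-bilinear maps B : L x M -> E vanishing on L x N. Uncurried,
   these are exactly the homomorphisms L -> (M/N)^v; as the elements of (M/N)^v killing a fixed u
   form a submodule, u lies in the smile dual of the trace iff B s u = 0 for all such B and all
   s in S. On the other side, such a B extends linearly to the free module on L x M and kills the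
   tensor relations and L (x) N, so B s u = 0 whenever s (x) u comes from L (x) N. If it does not,
   E separates it from that image: partial maps into E extend to the whole free module (Baer's
   criterion plus Zorn's lemma), and an element of E with annihilator the maximal ideal can be
   prescribed as the value at s (x) u. *)

lemma hom_RI:
  assumes "\<And>x. x \<in> carrier M \<Longrightarrow> f x \<in> carrier E" "f \<in> extensional (carrier M)"
    "\<And>x y. x \<in> carrier M \<Longrightarrow> y \<in> carrier M \<Longrightarrow> f (x \<oplus>\<^bsub>M\<^esub> y) = f x \<oplus>\<^bsub>E\<^esub> f y"
    "\<And>a x. a \<in> carrier R \<Longrightarrow> x \<in> carrier M \<Longrightarrow> f (a \<odot>\<^bsub>M\<^esub> x) = a \<odot>\<^bsub>E\<^esub> f x"
  shows "f \<in> hom_R R M E"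
  using assms unfolding hom_R_def by auto

lemma hom_RD:
  assumes "f \<in> hom_R R M E"
  shows hom_R_closed: "\<And>x. x \<in> carrier M \<Longrightarrow> f x \<in> carrier E"
    and hom_R_extensional: "f \<in> extensional (carrier M)"
    and hom_R_add: "\<And>x y. x \<in> carrier M \<Longrightarrow> y \<in> carrier M \<Longrightarrow> f (x \<oplus>\<^bsub>M\<^esub> y) = f x \<oplus>\<^bsub>E\<^esub> f y"
    and hom_R_smult: "\<And>a x. a \<in> carrier R \<Longrightarrow> x \<in> carrier M \<Longrightarrow> f (a \<odot>\<^bsub>M\<^esub> x) = a \<odot>\<^bsub>E\<^esub> f x"
  using assms unfolding hom_R_def by auto

lemma (in module) a_inv_eq_smult_minus_one:
  "x \<in> carrier M \<Longrightarrow> \<ominus>\<^bsub>M\<^esub> x = (\<ominus> \<one>) \<odot>\<^bsub>M\<^esub> x"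
  by (simp add: smult_l_minus)

lemma (in module) submodule_smult_closedI:
  assumes "H \<subseteq> carrier M" "\<zero>\<^bsub>M\<^esub> \<in> H"
    and "\<And>x y. x \<in> H \<Longrightarrow> y \<in> H \<Longrightarrow> x \<oplus>\<^bsub>M\<^esub> y \<in> H"
    and "\<And>a x. a \<in> carrier R \<Longrightarrow> x \<in> H \<Longrightarrow> a \<odot>\<^bsub>M\<^esub> x \<in> H"
  shows "submodule H R M"
  using assms by (intro submoduleI) (auto simp: a_inv_eq_smult_minus_one subsetD)

lemma (in abelian_group) minus_eq_zero_iff:
  "x \<in> carrier G \<Longrightarrow> y \<in> carrier G \<Longrightarrow> x \<ominus> y = \<zero> \<longleftrightarrow> x = y"
  by (metis a_minus_def add.inv_closed add.inv_equality add.inv_inv r_neg minus_eq add.m_comm)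

lemma hom_R_minus:
  assumes "module R M" "module R E" "f \<in> hom_R R M E" "x \<in> carrier M" "y \<in> carrier M"
  shows "f (x \<ominus>\<^bsub>M\<^esub> y) = f x \<ominus>\<^bsub>E\<^esub> f y"
proof -
  interpret M: module R M by fact
  interpret E: module R E by fact
  have "f (x \<ominus>\<^bsub>M\<^esub> y) = f x \<oplus>\<^bsub>E\<^esub> (\<ominus>\<^bsub>R\<^esub> \<one>\<^bsub>R\<^esub>) \<odot>\<^bsub>E\<^esub> f y"
    using assms(3-5) by (simp add: a_minus_def M.a_inv_eq_smult_minus_one hom_R_add hom_R_smult)
  then show ?thesis
    using assms(3,5) by (simp add: a_minus_def E.a_inv_eq_smult_minus_one hom_R_closed)
qed

lemma hom_R_kernel_submodule:
  assumes "module R M" "module R E" "f \<in> hom_R R M E"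
  shows "submodule {x \<in> carrier M. f x = \<zero>\<^bsub>E\<^esub>} R M"
proof -
  interpret M: module R M by fact
  interpret E: module R E by fact
  have "f \<zero>\<^bsub>M\<^esub> = \<zero>\<^bsub>R\<^esub> \<odot>\<^bsub>E\<^esub> f \<zero>\<^bsub>M\<^esub>"
    using hom_R_smult[OF assms(3), of "\<zero>\<^bsub>R\<^esub>" "\<zero>\<^bsub>M\<^esub>"] by simp
  then have "f \<zero>\<^bsub>M\<^esub> = \<zero>\<^bsub>E\<^esub>"
    using hom_R_closed[OF assms(3)] by simp
  then show ?thesis
    using assms(3) by (intro M.submodule_smult_closedI) (auto simp: hom_R_add hom_R_smult)
qed

lemma hom_R_ideal_moduleI:
  assumes "f \<in> J \<rightarrow> carrier E" "f \<in> extensional J"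
    "\<And>a b. a \<in> J \<Longrightarrow> b \<in> J \<Longrightarrow> f (a \<oplus>\<^bsub>R\<^esub> b) = f a \<oplus>\<^bsub>E\<^esub> f b"
    "\<And>a b. a \<in> carrier R \<Longrightarrow> b \<in> J \<Longrightarrow> f (a \<otimes>\<^bsub>R\<^esub> b) = a \<odot>\<^bsub>E\<^esub> f b"
  shows "f \<in> hom_R R ((ring_module R)\<lparr>carrier := J\<rparr>) E"
  unfolding hom_R_def ring_module_def using assms by simp

lemma hom_R_ring_moduleD:
  assumes "g \<in> hom_R R (ring_module R) E"
  shows "x \<in> carrier R \<Longrightarrow> g x \<in> carrier E"
    and "a \<in> carrier R \<Longrightarrow> x \<in> carrier R \<Longrightarrow> g (a \<otimes>\<^bsub>R\<^esub> x) = a \<odot>\<^bsub>E\<^esub> g x"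
  using assms unfolding hom_R_def ring_module_def by auto

section \<open>Proper ideals of a local Noetherian ring\<close>

lemma (in noetherian_ring) ideal_subset_maximalideal:
  assumes "ideal I R" "\<one> \<notin> I"
  shows "\<exists>m. maximalideal m R \<and> I \<subseteq> m"
proof -
  let ?A = "{J. ideal J R \<and> I \<subseteq> J \<and> \<one> \<notin> J}"
  have "\<exists>m\<in>?A. \<forall>J\<in>?A. m \<subseteq> J \<longrightarrow> J = m"
  proof (rule subset_Zorn_nonempty)
    show "?A \<noteq> {}" using assms by blast
  next
    fix C assume C: "C \<noteq> {}" "subset.chain ?A C"
    then have "subset.chain {J. ideal J R} C" unfolding pred_on.chain_def by blast
    then have "\<Union>C \<in> C" using ideal_chain_is_trivial C(1) by blast
    then show "\<Union>C \<in> ?A" using C(2) unfolding pred_on.chain_def by blast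
  qed
  then obtain m where m: "m \<in> ?A" and max: "\<forall>J\<in>?A. m \<subseteq> J \<longrightarrow> J = m" ..
  have "maximalideal m R"
  proof (rule maximalidealI)
    show "ideal m R" "carrier R \<noteq> m" using m by auto
  next
    fix J assume J: "ideal J R" "m \<subseteq> J" "J \<subseteq> carrier R"
    show "J = m \<or> J = carrier R"
    proof (cases "\<one> \<in> J")
      case True
      then show ?thesis using ideal.one_imp_carrier[OF J(1)] by simp
    next
      case False
      then show ?thesis using J m max by blast
    qed
  qed
  with m show ?thesis by blast
qed

lemma local_ring_ex1_maximalideal:
  "local_ring R \<Longrightarrow> \<exists>!m. maximalideal m R"
  unfolding local_ring_def by simp

lemma maximalideal_max_ideal:
  "local_ring R \<Longrightarrow> maximalideal (max_ideal R) R"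
  unfolding max_ideal_def by (rule theI'[OF local_ring_ex1_maximalideal])

lemma local_noetherian_proper_ideal_subset_max_ideal:
  assumes "local_ring R" "noetherian_ring R" "ideal I R" "\<one>\<^bsub>R\<^esub> \<notin> I"
  shows "I \<subseteq> max_ideal R"
proof -
  obtain m where m: "maximalideal m R" "I \<subseteq> m"
    using noetherian_ring.ideal_subset_maximalideal[OF assms(2-4)] by blast
  have "max_ideal R = m"
    unfolding max_ideal_def by (rule the1_equality[OF local_ring_ex1_maximalideal[OF assms(1)] m(1)])
  with m(2) show ?thesis by simp
qed

lemma injective_hull_residue_element:
  assumes "local_ring R" "noetherian_ring R" "injective_hull_residue R E"
  obtains e0 where "e0 \<in> carrier E" "e0 \<noteq> \<zero>\<^bsub>E\<^esub>"
    "\<And>I. ideal I R \<Longrightarrow> \<one>\<^bsub>R\<^esub> \<notin> I \<Longrightarrow> I \<subseteq> {a \<in> carrier R. a \<odot>\<^bsub>E\<^esub> e0 = \<zero>\<^bsub>E\<^esub>}"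
proof -
  obtain e0 where e0: "e0 \<in> carrier E"
    and ann: "{a \<in> carrier R. a \<odot>\<^bsub>E\<^esub> e0 = \<zero>\<^bsub>E\<^esub>} = max_ideal R"
    using assms(3) unfolding injective_hull_residue_def by blast
  interpret E: module R E using assms(3) unfolding injective_hull_residue_def by blast
  interpret m: maximalideal "max_ideal R" R using maximalideal_max_ideal[OF assms(1)] .
  have "\<one>\<^bsub>R\<^esub> \<notin> max_ideal R" using m.I_notcarr m.one_imp_carrier by blast
  then have "\<one>\<^bsub>R\<^esub> \<odot>\<^bsub>E\<^esub> e0 \<noteq> \<zero>\<^bsub>E\<^esub>" unfolding ann[symmetric] by simp
  then have "e0 \<noteq> \<zero>\<^bsub>E\<^esub>" using e0 by simp
  moreover have "I \<subseteq> {a \<in> carrier R. a \<odot>\<^bsub>E\<^esub> e0 = \<zero>\<^bsub>E\<^esub>}" if "ideal I R" "\<one>\<^bsub>R\<^esub> \<notin> I" for I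
    using local_noetherian_proper_ideal_subset_max_ideal[OF assms(1,2) that] unfolding ann .
  ultimately show ?thesis using that e0 by blast
qed

section \<open>Baer's criterion and cogeneration\<close>

definition partial_hom_graph ::
  "('r,'x) ring_scheme \<Rightarrow> ('r,'t) module \<Rightarrow> ('r,'e) module \<Rightarrow> ('t \<times> 'e) set \<Rightarrow> bool" where
  "partial_hom_graph R T E G \<longleftrightarrow> G \<subseteq> carrier T \<times> carrier E \<and> (\<zero>\<^bsub>T\<^esub>, \<zero>\<^bsub>E\<^esub>) \<in> G \<and>
     (\<forall>e. (\<zero>\<^bsub>T\<^esub>, e) \<in> G \<longrightarrow> e = \<zero>\<^bsub>E\<^esub>) \<and>
     (\<forall>t e t' e'. (t, e) \<in> G \<longrightarrow> (t', e') \<in> G \<longrightarrow> (t \<oplus>\<^bsub>T\<^esub> t', e \<oplus>\<^bsub>E\<^esub> e') \<in> G) \<and>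
     (\<forall>a t e. a \<in> carrier R \<longrightarrow> (t, e) \<in> G \<longrightarrow> (a \<odot>\<^bsub>T\<^esub> t, a \<odot>\<^bsub>E\<^esub> e) \<in> G)"

definition graph_extend ::
  "('r,'x) ring_scheme \<Rightarrow> ('r,'t) module \<Rightarrow> ('r,'e) module \<Rightarrow> ('t \<times> 'e) set \<Rightarrow> 't \<Rightarrow> 'e \<Rightarrow> ('t \<times> 'e) set" where
  "graph_extend R T E G t e =
     {(d \<oplus>\<^bsub>T\<^esub> a \<odot>\<^bsub>T\<^esub> t, x \<oplus>\<^bsub>E\<^esub> a \<odot>\<^bsub>E\<^esub> e) | d x a. (d, x) \<in> G \<and> a \<in> carrier R}"

locale module_pair = T: module R T + E: module R E
  for R :: "('r,'x) ring_scheme" and T :: "('r,'t) module" and E :: "('r,'e) module"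
begin

lemma partial_hom_graphI:
  assumes "G \<subseteq> carrier T \<times> carrier E" "(\<zero>\<^bsub>T\<^esub>, \<zero>\<^bsub>E\<^esub>) \<in> G"
    "\<And>e. (\<zero>\<^bsub>T\<^esub>, e) \<in> G \<Longrightarrow> e = \<zero>\<^bsub>E\<^esub>"
    "\<And>t e t' e'. (t, e) \<in> G \<Longrightarrow> (t', e') \<in> G \<Longrightarrow> (t \<oplus>\<^bsub>T\<^esub> t', e \<oplus>\<^bsub>E\<^esub> e') \<in> G"
    "\<And>a t e. a \<in> carrier R \<Longrightarrow> (t, e) \<in> G \<Longrightarrow> (a \<odot>\<^bsub>T\<^esub> t, a \<odot>\<^bsub>E\<^esub> e) \<in> G"
  shows "partial_hom_graph R T E G"
  unfolding partial_hom_graph_def using assms by blast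

context
  fixes G assumes G: "partial_hom_graph R T E G"
begin

lemma graph_closed: "(t, e) \<in> G \<Longrightarrow> t \<in> carrier T \<and> e \<in> carrier E"
  using G unfolding partial_hom_graph_def by blast

lemma graph_zero: "(\<zero>\<^bsub>T\<^esub>, \<zero>\<^bsub>E\<^esub>) \<in> G"
  using G unfolding partial_hom_graph_def by blast

lemma graph_zero_unique: "(\<zero>\<^bsub>T\<^esub>, e) \<in> G \<Longrightarrow> e = \<zero>\<^bsub>E\<^esub>"
  using G unfolding partial_hom_graph_def by blast

lemma graph_add: "(t, e) \<in> G \<Longrightarrow> (t', e') \<in> G \<Longrightarrow> (t \<oplus>\<^bsub>T\<^esub> t', e \<oplus>\<^bsub>E\<^esub> e') \<in> G"
  using G unfolding partial_hom_graph_def by blast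

lemma graph_smult: "a \<in> carrier R \<Longrightarrow> (t, e) \<in> G \<Longrightarrow> (a \<odot>\<^bsub>T\<^esub> t, a \<odot>\<^bsub>E\<^esub> e) \<in> G"
  using G unfolding partial_hom_graph_def by blast

lemma graph_neg:
  assumes "(t, e) \<in> G"
  shows "(\<ominus>\<^bsub>T\<^esub> t, \<ominus>\<^bsub>E\<^esub> e) \<in> G"
  using graph_smult[OF _ assms, of "\<ominus>\<^bsub>R\<^esub> \<one>\<^bsub>R\<^esub>"] graph_closed[OF assms]
  by (simp add: T.a_inv_eq_smult_minus_one E.a_inv_eq_smult_minus_one)

lemma graph_functional:
  assumes "(t, e) \<in> G" "(t, e') \<in> G"
  shows "e = e'"
proof -
  have c: "t \<in> carrier T" "e \<in> carrier E" "e' \<in> carrier E"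
    using graph_closed assms by auto
  have "(t \<oplus>\<^bsub>T\<^esub> \<ominus>\<^bsub>T\<^esub> t, e \<oplus>\<^bsub>E\<^esub> \<ominus>\<^bsub>E\<^esub> e') \<in> G"
    using graph_add[OF assms(1) graph_neg[OF assms(2)]] .
  then have "e \<ominus>\<^bsub>E\<^esub> e' = \<zero>\<^bsub>E\<^esub>"
    using c by (intro graph_zero_unique) (simp add: T.r_neg a_minus_def)
  then show ?thesis using c E.minus_eq_zero_iff by blast
qed

lemma graph_colon_ideal:
  assumes t: "t \<in> carrier T"
  shows "ideal {a \<in> carrier R. \<exists>x. (a \<odot>\<^bsub>T\<^esub> t, x) \<in> G} R"
proof -
  let ?J = "{a \<in> carrier R. \<exists>x. (a \<odot>\<^bsub>T\<^esub> t, x) \<in> G}"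
  have add: "a \<oplus>\<^bsub>R\<^esub> b \<in> ?J" if "a \<in> ?J" "b \<in> ?J" for a b
    using that graph_add t by (fastforce simp: T.smult_l_distr)
  have smult: "c \<otimes>\<^bsub>R\<^esub> a \<in> ?J" if "a \<in> ?J" "c \<in> carrier R" for a c
    using that graph_smult t by (fastforce simp: T.smult_assoc1)
  have "\<zero>\<^bsub>R\<^esub> \<in> ?J" using graph_zero t by auto
  moreover have "\<ominus>\<^bsub>R\<^esub> a \<in> ?J" if "a \<in> ?J" for a
    using smult[OF that, of "\<ominus>\<^bsub>R\<^esub> \<one>\<^bsub>R\<^esub>"] that by (simp add: T.R.l_minus)
  ultimately show ?thesis
    using add smult by (intro idealI T.R.ring_axioms T.R.add.subgroupI) (auto simp: T.R.m_comm)
qed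

lemma graph_extend_memI:
  "(d, x) \<in> G \<Longrightarrow> a \<in> carrier R \<Longrightarrow>
    (d \<oplus>\<^bsub>T\<^esub> a \<odot>\<^bsub>T\<^esub> t, x \<oplus>\<^bsub>E\<^esub> a \<odot>\<^bsub>E\<^esub> e) \<in> graph_extend R T E G t e"
  unfolding graph_extend_def by blast

lemma graph_extend_memE:
  assumes "(p, q) \<in> graph_extend R T E G t e"
  obtains d x a where "(d, x) \<in> G" "a \<in> carrier R"
    "p = d \<oplus>\<^bsub>T\<^esub> a \<odot>\<^bsub>T\<^esub> t" "q = x \<oplus>\<^bsub>E\<^esub> a \<odot>\<^bsub>E\<^esub> e"
  using assms unfolding graph_extend_def by blast

text \<open>\<open>graph_extend\<close> is the graph of \<open>d + a t \<mapsto> x + a e\<close>; \<open>compat\<close> is exactly its well-definedness.\<close>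

lemma graph_extend:
  assumes t: "t \<in> carrier T" and e: "e \<in> carrier E"
    and compat: "\<And>a x. a \<in> carrier R \<Longrightarrow> (a \<odot>\<^bsub>T\<^esub> t, x) \<in> G \<Longrightarrow> x = a \<odot>\<^bsub>E\<^esub> e"
  shows "partial_hom_graph R T E (graph_extend R T E G t e)"
    and "G \<subseteq> graph_extend R T E G t e"
    and "(t, e) \<in> graph_extend R T E G t e"
proof -
  let ?G = "graph_extend R T E G t e"
  show sub: "G \<subseteq> ?G"
  proof
    fix p assume "p \<in> G"
    moreover obtain d x where "p = (d, x)" by fastforce
    ultimately show "p \<in> ?G"
      using graph_extend_memI[of d x "\<zero>\<^bsub>R\<^esub>" t e] graph_closed t e by auto
  qed
  show "(t, e) \<in> ?G"
    using graph_extend_memI[OF graph_zero, of "\<one>\<^bsub>R\<^esub>" t e] t e by simp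
  show "partial_hom_graph R T E ?G"
  proof (rule partial_hom_graphI)
    show "?G \<subseteq> carrier T \<times> carrier E"
      using graph_closed t e by (fastforce elim: graph_extend_memE)
    show "(\<zero>\<^bsub>T\<^esub>, \<zero>\<^bsub>E\<^esub>) \<in> ?G" using sub graph_zero by blast
  next
    fix y assume "(\<zero>\<^bsub>T\<^esub>, y) \<in> ?G"
    then obtain d x a where dx: "(d, x) \<in> G" and a: "a \<in> carrier R"
      and p: "\<zero>\<^bsub>T\<^esub> = d \<oplus>\<^bsub>T\<^esub> a \<odot>\<^bsub>T\<^esub> t" and q: "y = x \<oplus>\<^bsub>E\<^esub> a \<odot>\<^bsub>E\<^esub> e"
      by (rule graph_extend_memE)
    have c: "d \<in> carrier T" "x \<in> carrier E" using graph_closed[OF dx] by auto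
    have "a \<odot>\<^bsub>T\<^esub> t = \<ominus>\<^bsub>T\<^esub> d"
      using p c a t by (metis T.add.inv_equality T.add.m_comm T.smult_closed)
    then have "\<ominus>\<^bsub>E\<^esub> x = a \<odot>\<^bsub>E\<^esub> e" using compat[OF a] graph_neg[OF dx] by simp
    then show "y = \<zero>\<^bsub>E\<^esub>" using q c by (metis E.r_neg)
  next
    fix p y p' y' assume "(p, y) \<in> ?G" "(p', y') \<in> ?G"
    then obtain d x a d' x' a' where dx: "(d, x) \<in> G" "(d', x') \<in> G" and a: "a \<in> carrier R" "a' \<in> carrier R"
      and p: "p = d \<oplus>\<^bsub>T\<^esub> a \<odot>\<^bsub>T\<^esub> t" "p' = d' \<oplus>\<^bsub>T\<^esub> a' \<odot>\<^bsub>T\<^esub> t"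
      and q: "y = x \<oplus>\<^bsub>E\<^esub> a \<odot>\<^bsub>E\<^esub> e" "y' = x' \<oplus>\<^bsub>E\<^esub> a' \<odot>\<^bsub>E\<^esub> e"
      by (elim graph_extend_memE) blast
    have c: "d \<in> carrier T" "x \<in> carrier E" "d' \<in> carrier T" "x' \<in> carrier E"
      using graph_closed dx by auto
    have "(d \<oplus>\<^bsub>T\<^esub> d' \<oplus>\<^bsub>T\<^esub> (a \<oplus>\<^bsub>R\<^esub> a') \<odot>\<^bsub>T\<^esub> t, x \<oplus>\<^bsub>E\<^esub> x' \<oplus>\<^bsub>E\<^esub> (a \<oplus>\<^bsub>R\<^esub> a') \<odot>\<^bsub>E\<^esub> e) \<in> ?G"
      using graph_extend_memI[OF graph_add[OF dx], of "a \<oplus>\<^bsub>R\<^esub> a'" t e] a by simp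
    moreover have "p \<oplus>\<^bsub>T\<^esub> p' = d \<oplus>\<^bsub>T\<^esub> d' \<oplus>\<^bsub>T\<^esub> (a \<oplus>\<^bsub>R\<^esub> a') \<odot>\<^bsub>T\<^esub> t"
      using c a t by (simp add: p T.smult_l_distr T.a_ac)
    moreover have "y \<oplus>\<^bsub>E\<^esub> y' = x \<oplus>\<^bsub>E\<^esub> x' \<oplus>\<^bsub>E\<^esub> (a \<oplus>\<^bsub>R\<^esub> a') \<odot>\<^bsub>E\<^esub> e"
      using c a e by (simp add: q E.smult_l_distr E.a_ac)
    ultimately show "(p \<oplus>\<^bsub>T\<^esub> p', y \<oplus>\<^bsub>E\<^esub> y') \<in> ?G" by simp
  next
    fix b p y assume b: "b \<in> carrier R" and "(p, y) \<in> ?G"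
    then obtain d x a where dx: "(d, x) \<in> G" and a: "a \<in> carrier R"
      and p: "p = d \<oplus>\<^bsub>T\<^esub> a \<odot>\<^bsub>T\<^esub> t" and q: "y = x \<oplus>\<^bsub>E\<^esub> a \<odot>\<^bsub>E\<^esub> e"
      by (elim graph_extend_memE)
    have c: "d \<in> carrier T" "x \<in> carrier E" using graph_closed[OF dx] by auto
    have "(b \<odot>\<^bsub>T\<^esub> d \<oplus>\<^bsub>T\<^esub> (b \<otimes>\<^bsub>R\<^esub> a) \<odot>\<^bsub>T\<^esub> t, b \<odot>\<^bsub>E\<^esub> x \<oplus>\<^bsub>E\<^esub> (b \<otimes>\<^bsub>R\<^esub> a) \<odot>\<^bsub>E\<^esub> e) \<in> ?G"
      using graph_extend_memI[OF graph_smult[OF b dx], of "b \<otimes>\<^bsub>R\<^esub> a" t e] a b by simp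
    moreover have "b \<odot>\<^bsub>T\<^esub> p = b \<odot>\<^bsub>T\<^esub> d \<oplus>\<^bsub>T\<^esub> (b \<otimes>\<^bsub>R\<^esub> a) \<odot>\<^bsub>T\<^esub> t"
      using c a b t by (simp add: p T.smult_r_distr T.smult_assoc1)
    moreover have "b \<odot>\<^bsub>E\<^esub> y = b \<odot>\<^bsub>E\<^esub> x \<oplus>\<^bsub>E\<^esub> (b \<otimes>\<^bsub>R\<^esub> a) \<odot>\<^bsub>E\<^esub> e"
      using c a b e by (simp add: q E.smult_r_distr E.smult_assoc1)
    ultimately show "(b \<odot>\<^bsub>T\<^esub> p, b \<odot>\<^bsub>E\<^esub> y) \<in> ?G" by simp
  qed
qed

end

lemma partial_hom_graph_chain_Union:
  assumes C: "C \<noteq> {}" "subset.chain {G. partial_hom_graph R T E G} C"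
  shows "partial_hom_graph R T E (\<Union>C)"
proof -
  have G: "partial_hom_graph R T E G" if "G \<in> C" for G
    using C(2) that unfolding subset_chain_def by auto
  have common: "\<exists>G\<in>C. X \<subseteq> G \<and> Y \<subseteq> G" if "X \<in> C" "Y \<in> C" for X Y
    using C(2) that unfolding subset_chain_def by metis
  show ?thesis
  proof (rule partial_hom_graphI)
    show "\<Union>C \<subseteq> carrier T \<times> carrier E" using graph_closed G by fast
    show "(\<zero>\<^bsub>T\<^esub>, \<zero>\<^bsub>E\<^esub>) \<in> \<Union>C" using graph_zero G C(1) by blast
    show "\<And>e. (\<zero>\<^bsub>T\<^esub>, e) \<in> \<Union>C \<Longrightarrow> e = \<zero>\<^bsub>E\<^esub>" using graph_zero_unique G by blast
    show "\<And>a t e. a \<in> carrier R \<Longrightarrow> (t, e) \<in> \<Union>C \<Longrightarrow> (a \<odot>\<^bsub>T\<^esub> t, a \<odot>\<^bsub>E\<^esub> e) \<in> \<Union>C"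
      using graph_smult G by blast
  next
    fix t e t' e' assume "(t, e) \<in> \<Union>C" "(t', e') \<in> \<Union>C"
    then obtain G where "G \<in> C" "(t, e) \<in> G" "(t', e') \<in> G" using common by blast
    then have "(t \<oplus>\<^bsub>T\<^esub> t', e \<oplus>\<^bsub>E\<^esub> e') \<in> G" using graph_add G by blast
    with \<open>G \<in> C\<close> show "(t \<oplus>\<^bsub>T\<^esub> t', e \<oplus>\<^bsub>E\<^esub> e') \<in> \<Union>C" by blast
  qed
qed

text \<open>Baer's criterion at work: the values of \<open>G\<close> on the multiples of \<open>t\<close> form a map on an
  ideal of \<open>R\<close>, which extends to \<open>R\<close>; its value at \<open>\<one>\<close> is a compatible image for \<open>t\<close>.\<close>

lemma injective_module_compatible_value:
  assumes inj: "injective_module R E" and G: "partial_hom_graph R T E G" and t: "t \<in> carrier T"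
  obtains e where "e \<in> carrier E" "\<And>a x. a \<in> carrier R \<Longrightarrow> (a \<odot>\<^bsub>T\<^esub> t, x) \<in> G \<Longrightarrow> x = a \<odot>\<^bsub>E\<^esub> e"
proof -
  let ?J = "{a \<in> carrier R. \<exists>x. (a \<odot>\<^bsub>T\<^esub> t, x) \<in> G}"
  define f where "f = (\<lambda>a\<in>?J. THE x. (a \<odot>\<^bsub>T\<^esub> t, x) \<in> G)"
  have f_eq: "f a = x" if "a \<in> carrier R" "(a \<odot>\<^bsub>T\<^esub> t, x) \<in> G" for a x
    using that graph_functional[OF G] unfolding f_def by (auto intro: the_equality)
  have f_graph: "(a \<odot>\<^bsub>T\<^esub> t, f a) \<in> G" if "a \<in> ?J" for a
    using that f_eq by auto
  have "f \<in> hom_R R ((ring_module R)\<lparr>carrier := ?J\<rparr>) E"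
  proof (rule hom_R_ideal_moduleI)
    show "f \<in> ?J \<rightarrow> carrier E" using f_graph graph_closed[OF G] by blast
    show "f \<in> extensional ?J" unfolding f_def by simp
  next
    fix a b assume "a \<in> ?J" "b \<in> ?J"
    then show "f (a \<oplus>\<^bsub>R\<^esub> b) = f a \<oplus>\<^bsub>E\<^esub> f b"
      using graph_add[OF G f_graph f_graph] t by (intro f_eq) (auto simp: T.smult_l_distr)
  next
    fix a b assume "a \<in> carrier R" "b \<in> ?J"
    then show "f (a \<otimes>\<^bsub>R\<^esub> b) = a \<odot>\<^bsub>E\<^esub> f b"
      using graph_smult[OF G _ f_graph] t by (intro f_eq) (auto simp: T.smult_assoc1)
  qed
  then obtain g where g: "g \<in> hom_R R (ring_module R) E" and gf: "\<And>a. a \<in> ?J \<Longrightarrow> g a = f a"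
    using inj graph_colon_ideal[OF G t] unfolding injective_module_def by blast
  show ?thesis
  proof
    show "g \<one>\<^bsub>R\<^esub> \<in> carrier E" using hom_R_ring_moduleD(1)[OF g] by simp
  next
    fix a x assume a: "a \<in> carrier R" and ax: "(a \<odot>\<^bsub>T\<^esub> t, x) \<in> G"
    have "a \<in> ?J" using a ax by blast
    then have "x = g a" using f_eq[OF a ax] gf by simp
    also have "\<dots> = a \<odot>\<^bsub>E\<^esub> g \<one>\<^bsub>R\<^esub>"
      using hom_R_ring_moduleD(2)[OF g a, of "\<one>\<^bsub>R\<^esub>"] a by simp
    finally show "x = a \<odot>\<^bsub>E\<^esub> g \<one>\<^bsub>R\<^esub>" .
  qed
qed

lemma injective_module_total_graph:
  assumes inj: "injective_module R E" and G0: "partial_hom_graph R T E G0"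
  obtains G where "partial_hom_graph R T E G" "G0 \<subseteq> G" "fst ` G = carrier T"
proof -
  let ?A = "{G. partial_hom_graph R T E G \<and> G0 \<subseteq> G}"
  have "\<exists>G\<in>?A. \<forall>G'\<in>?A. G \<subseteq> G' \<longrightarrow> G' = G"
  proof (rule subset_Zorn_nonempty)
    show "?A \<noteq> {}" using G0 by blast
  next
    fix C assume C: "C \<noteq> {}" "subset.chain ?A C"
    then have "subset.chain {G. partial_hom_graph R T E G} C" unfolding subset_chain_def by auto
    then have "partial_hom_graph R T E (\<Union>C)" using partial_hom_graph_chain_Union C(1) by blast
    moreover obtain G1 where "G1 \<in> C" using C(1) by blast
    then have "G0 \<subseteq> \<Union>C" using C(2) unfolding subset_chain_def by blast
    ultimately show "\<Union>C \<in> ?A" by blast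
  qed
  then obtain G where G: "partial_hom_graph R T E G" "G0 \<subseteq> G"
    and max: "\<forall>G'\<in>?A. G \<subseteq> G' \<longrightarrow> G' = G" by blast
  have "fst ` G = carrier T"
  proof (rule ccontr)
    assume "fst ` G \<noteq> carrier T"
    moreover have "fst ` G \<subseteq> carrier T" using graph_closed[OF G(1)] by force
    ultimately obtain t where t: "t \<in> carrier T" "t \<notin> fst ` G" by blast
    obtain e where e: "e \<in> carrier E" "\<And>a x. a \<in> carrier R \<Longrightarrow> (a \<odot>\<^bsub>T\<^esub> t, x) \<in> G \<Longrightarrow> x = a \<odot>\<^bsub>E\<^esub> e"
      using injective_module_compatible_value[OF inj G(1) t(1)] by blast
    note ext = graph_extend[OF G(1) t(1) e]
    have "graph_extend R T E G t e = G" using max ext(1,2) G(2) by blast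
    then show False using ext(3) t(2) by force
  qed
  then show ?thesis using that G by blast
qed

lemma total_graph_hom:
  assumes G: "partial_hom_graph R T E G" and total: "fst ` G = carrier T"
  obtains \<phi> where "\<phi> \<in> hom_R R T E" "\<And>t x. (t, x) \<in> G \<Longrightarrow> \<phi> t = x"
proof
  define \<phi> where "\<phi> = (\<lambda>t\<in>carrier T. THE x. (t, x) \<in> G)"
  show \<phi>_eq: "\<phi> t = x" if "(t, x) \<in> G" for t x
    using that graph_functional[OF G] graph_closed[OF G] unfolding \<phi>_def by (auto intro: the_equality)
  have \<phi>_graph: "(t, \<phi> t) \<in> G" if "t \<in> carrier T" for t
    using that total \<phi>_eq by force
  show "\<phi> \<in> hom_R R T E"
  proof (rule hom_RI)
    show "\<phi> t \<in> carrier E" if "t \<in> carrier T" for t using graph_closed[OF G \<phi>_graph[OF that]] by blast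
    show "\<phi> \<in> extensional (carrier T)" unfolding \<phi>_def by simp
    show "\<phi> (x \<oplus>\<^bsub>T\<^esub> y) = \<phi> x \<oplus>\<^bsub>E\<^esub> \<phi> y" if "x \<in> carrier T" "y \<in> carrier T" for x y
      using \<phi>_eq graph_add[OF G \<phi>_graph \<phi>_graph] that by blast
    show "\<phi> (a \<odot>\<^bsub>T\<^esub> x) = a \<odot>\<^bsub>E\<^esub> \<phi> x" if "a \<in> carrier R" "x \<in> carrier T" for a x
      using \<phi>_eq graph_smult[OF G _ \<phi>_graph] that by blast
  qed
qed

lemma partial_hom_graph_zero_on_submodule:
  assumes "submodule W R T"
  shows "partial_hom_graph R T E (W \<times> {\<zero>\<^bsub>E\<^esub>})"
proof -
  interpret W: submodule W R T by fact
  show ?thesis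
    by (rule partial_hom_graphI) (use T.submoduleE[OF assms] W.one_closed in auto)
qed

text \<open>\<open>E\<close> cogenerates: an element \<open>e0\<close> killed by every proper ideal of \<open>R\<close> can be
  prescribed as the image of any \<open>v \<notin> W\<close>, since the ideal \<open>{a. a v \<in> W}\<close> is proper.\<close>

lemma injective_module_separating_hom:
  assumes inj: "injective_module R E" and W: "submodule W R T"
    and v: "v \<in> carrier T" "v \<notin> W" and e0: "e0 \<in> carrier E"
    and ann: "\<And>I. ideal I R \<Longrightarrow> \<one>\<^bsub>R\<^esub> \<notin> I \<Longrightarrow> I \<subseteq> {a \<in> carrier R. a \<odot>\<^bsub>E\<^esub> e0 = \<zero>\<^bsub>E\<^esub>}"
  obtains \<phi> where "\<phi> \<in> hom_R R T E" "\<And>w. w \<in> W \<Longrightarrow> \<phi> w = \<zero>\<^bsub>E\<^esub>" "\<phi> v = e0"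
proof -
  let ?G0 = "W \<times> {\<zero>\<^bsub>E\<^esub>}"
  have G0: "partial_hom_graph R T E ?G0" by (rule partial_hom_graph_zero_on_submodule[OF W])
  have compat: "x = a \<odot>\<^bsub>E\<^esub> e0" if "a \<in> carrier R" "(a \<odot>\<^bsub>T\<^esub> v, x) \<in> ?G0" for a x
  proof -
    have "\<one>\<^bsub>R\<^esub> \<notin> {a \<in> carrier R. \<exists>x. (a \<odot>\<^bsub>T\<^esub> v, x) \<in> ?G0}" using v by simp
    then have "a \<odot>\<^bsub>E\<^esub> e0 = \<zero>\<^bsub>E\<^esub>" using ann[OF graph_colon_ideal[OF G0 v(1)]] that by blast
    then show ?thesis using that(2) by simp
  qed
  note G1 = graph_extend[OF G0 v(1) e0 compat]
  obtain G where G: "partial_hom_graph R T E G" "graph_extend R T E ?G0 v e0 \<subseteq> G" "fst ` G = carrier T"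
    using injective_module_total_graph[OF inj G1(1)] by blast
  obtain \<phi> where \<phi>: "\<phi> \<in> hom_R R T E" "\<And>t x. (t, x) \<in> G \<Longrightarrow> \<phi> t = x"
    using total_graph_hom[OF G(1,3)] by blast
  show ?thesis
  proof (rule that[OF \<phi>(1)])
    show "\<phi> w = \<zero>\<^bsub>E\<^esub>" if "w \<in> W" for w using that G1(2) G(2) \<phi>(2) by blast
    show "\<phi> v = e0" using G1(3) G(2) \<phi>(2) by blast
  qed
qed

end

section \<open>Modules of functions and free modules\<close>

definition function_module :: "('r, 'e) module \<Rightarrow> 'a set \<Rightarrow> ('a \<Rightarrow> 'e) set \<Rightarrow> ('r, 'a \<Rightarrow> 'e) module" where
  "function_module E A H = \<lparr>carrier = H, monoid.mult = undefined, one = undefined,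
     zero = (\<lambda>x\<in>A. \<zero>\<^bsub>E\<^esub>),
     add = (\<lambda>f g. \<lambda>x\<in>A. f x \<oplus>\<^bsub>E\<^esub> g x),
     smult = (\<lambda>a f. \<lambda>x\<in>A. a \<odot>\<^bsub>E\<^esub> f x)\<rparr>"

lemma function_module_simps [simp]:
  "carrier (function_module E A H) = H"
  "\<zero>\<^bsub>function_module E A H\<^esub> = (\<lambda>x\<in>A. \<zero>\<^bsub>E\<^esub>)"
  "f \<oplus>\<^bsub>function_module E A H\<^esub> g = (\<lambda>x\<in>A. f x \<oplus>\<^bsub>E\<^esub> g x)"
  "a \<odot>\<^bsub>function_module E A H\<^esub> f = (\<lambda>x\<in>A. a \<odot>\<^bsub>E\<^esub> f x)"
  "(function_module E A H)\<lparr>carrier := H'\<rparr> = function_module E A H'"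
  by (simp_all add: function_module_def)

lemma module_function_module:
  assumes E: "module R E" and H: "H \<subseteq> extensional A"
    and closed: "\<And>f x. f \<in> H \<Longrightarrow> x \<in> A \<Longrightarrow> f x \<in> carrier E"
    and zero: "(\<lambda>x\<in>A. \<zero>\<^bsub>E\<^esub>) \<in> H"
    and add: "\<And>f g. f \<in> H \<Longrightarrow> g \<in> H \<Longrightarrow> (\<lambda>x\<in>A. f x \<oplus>\<^bsub>E\<^esub> g x) \<in> H"
    and smult: "\<And>a f. a \<in> carrier R \<Longrightarrow> f \<in> H \<Longrightarrow> (\<lambda>x\<in>A. a \<odot>\<^bsub>E\<^esub> f x) \<in> H"
  shows "module R (function_module E A H)"
proof -
  interpret E: module R E by fact
  have ext: "f = g" if "f \<in> extensional A" "g \<in> extensional A" "\<And>x. x \<in> A \<Longrightarrow> f x = g x" for f g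
    using that by (rule extensionalityI)
  have ext_H: "f \<in> extensional A" if "f \<in> H" for f using H that by blast
  show ?thesis
  proof (rule moduleI)
    show "cring R" by (rule E.R.is_cring)
    show "abelian_group (function_module E A H)"
    proof (rule abelian_groupI; simp only: function_module_simps)
      fix f assume f: "f \<in> H"
      show "(\<lambda>x\<in>A. (\<lambda>x\<in>A. \<zero>\<^bsub>E\<^esub>) x \<oplus>\<^bsub>E\<^esub> f x) = f"
        by (rule ext) (use f closed ext_H in auto)
      show "\<exists>g\<in>H. (\<lambda>x\<in>A. g x \<oplus>\<^bsub>E\<^esub> f x) = (\<lambda>x\<in>A. \<zero>\<^bsub>E\<^esub>)"
      proof
        show "(\<lambda>x\<in>A. (\<ominus>\<^bsub>R\<^esub> \<one>\<^bsub>R\<^esub>) \<odot>\<^bsub>E\<^esub> f x) \<in> H" using smult f by simp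
        show "(\<lambda>x\<in>A. (\<lambda>x\<in>A. (\<ominus>\<^bsub>R\<^esub> \<one>\<^bsub>R\<^esub>) \<odot>\<^bsub>E\<^esub> f x) x \<oplus>\<^bsub>E\<^esub> f x) = (\<lambda>x\<in>A. \<zero>\<^bsub>E\<^esub>)"
          by (rule restrict_ext) (use f closed in \<open>simp add: E.smult_l_minus E.l_neg\<close>)
      qed
    qed (use add zero closed in \<open>auto intro!: restrict_ext simp: E.a_ac\<close>)
  qed (use smult closed ext_H in \<open>auto intro!: ext simp: E.smult_l_distr E.smult_r_distr E.smult_assoc1\<close>)
qed

lemma module_ring_module:
  assumes "cring R"
  shows "module R (ring_module R)"
proof -
  interpret cring R by fact
  have "abelian_group (ring_module R)"
    by (rule abelian_groupI) (auto simp: ring_module_def a_ac intro: l_neg)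
  then show ?thesis
    by (rule moduleI[OF assms]) (auto simp: ring_module_def l_distr r_distr m_assoc)
qed

definition supp :: "('r, 'x) ring_scheme \<Rightarrow> ('a \<Rightarrow> 'r) \<Rightarrow> 'a set" where
  "supp R v = {p. v p \<noteq> \<zero>\<^bsub>R\<^esub>}"

text \<open>The generators \<open>free_gen\<close> and the spans \<open>free_span\<close> used in \<open>Defs\<close> to encode
  \<open>L \<otimes> M\<close> live in \<open>free_module R (carrier L \<times> carrier M)\<close>, whose operations are pointwise.\<close>

definition free_module :: "('r, 'x) ring_scheme \<Rightarrow> 'a set \<Rightarrow> ('r, 'a \<Rightarrow> 'r) module" where
  "free_module R C = function_module (ring_module R) UNIV
     {v. (\<forall>p. v p \<in> carrier R) \<and> finite (supp R v) \<and> supp R v \<subseteq> C}"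

lemma free_module_simps [simp]:
  "carrier (free_module R C) = {v. (\<forall>p. v p \<in> carrier R) \<and> finite (supp R v) \<and> supp R v \<subseteq> C}"
  "\<zero>\<^bsub>free_module R C\<^esub> = (\<lambda>p. \<zero>\<^bsub>R\<^esub>)"
  "v \<oplus>\<^bsub>free_module R C\<^esub> w = (\<lambda>p. v p \<oplus>\<^bsub>R\<^esub> w p)"
  "a \<odot>\<^bsub>free_module R C\<^esub> v = (\<lambda>p. a \<otimes>\<^bsub>R\<^esub> v p)"
  by (simp_all add: free_module_def ring_module_def restrict_UNIV)

lemma supp_add_subset:
  "supp R (\<lambda>p. v p \<oplus>\<^bsub>R\<^esub> w p) \<subseteq> supp R v \<union> supp R w" if "ring R" "\<forall>p. v p \<in> carrier R" "\<forall>p. w p \<in> carrier R"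
  using that unfolding supp_def by (auto simp: ring.ring_simprules)

lemma supp_smult_subset:
  "supp R (\<lambda>p. a \<otimes>\<^bsub>R\<^esub> v p) \<subseteq> supp R v" if "ring R" "a \<in> carrier R" "\<forall>p. v p \<in> carrier R"
  using that unfolding supp_def by (auto simp: ring.ring_simprules)

lemma module_free_module:
  assumes "cring R"
  shows "module R (free_module R C)"
  unfolding free_module_def
proof (rule module_function_module[OF module_ring_module[OF assms]])
  interpret cring R by fact
  let ?H = "{v. (\<forall>p. v p \<in> carrier R) \<and> finite (supp R v) \<and> supp R v \<subseteq> C}"
  show "(\<lambda>x\<in>UNIV. \<zero>\<^bsub>ring_module R\<^esub>) \<in> ?H" by (simp add: ring_module_def supp_def)
  show "(\<lambda>x\<in>UNIV. v x \<oplus>\<^bsub>ring_module R\<^esub> w x) \<in> ?H" if "v \<in> ?H" "w \<in> ?H" for v w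
    using that supp_add_subset[OF ring_axioms, of v w] by (auto simp: ring_module_def restrict_UNIV intro: finite_subset)
  show "(\<lambda>x\<in>UNIV. a \<odot>\<^bsub>ring_module R\<^esub> v x) \<in> ?H" if "a \<in> carrier R" "v \<in> ?H" for a v
    using that supp_smult_subset[OF ring_axioms, of a v] by (auto simp: ring_module_def restrict_UNIV intro: finite_subset)
qed (auto simp: ring_module_def)

lemma free_module_minus:
  assumes "cring R" "v \<in> carrier (free_module R C)" "w \<in> carrier (free_module R C)"
  shows "v \<ominus>\<^bsub>free_module R C\<^esub> w = (\<lambda>p. v p \<ominus>\<^bsub>R\<^esub> w p)"
proof -
  interpret F: module R "free_module R C" by (rule module_free_module[OF assms(1)])
  show ?thesis
    using assms(2,3) by (simp add: a_minus_def F.a_inv_eq_smult_minus_one F.R.l_minus)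
qed

lemma free_gen_in_free_module:
  assumes "ring R" "(l, m) \<in> C"
  shows "free_gen R l m \<in> carrier (free_module R C)"
proof -
  have "supp R (free_gen R l m) \<subseteq> {(l, m)}" by (auto simp: supp_def free_gen_def)
  then show ?thesis
    using assms by (auto simp: free_gen_def ring.ring_simprules intro: finite_subset)
qed

lemma free_span_subset_submodule:
  assumes "submodule H R (free_module R C)" "X \<subseteq> H"
  shows "free_span R X \<subseteq> H"
proof
  interpret H: submodule H R "free_module R C" by fact
  fix v assume "v \<in> free_span R X"
  then show "v \<in> H"
  proof (induction rule: free_span.induct)
    case zero
    show ?case using H.one_closed by simp
  next
    case (gen v)
    then show ?case using assms(2) by blast
  next
    case (add v w)
    then show ?case using H.m_closed[of v w] by simp
  next
    case (smult a v)
    then show ?case using H.smult_closed[of a v] by simp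
  qed
qed

lemma free_span_submodule:
  assumes "cring R" "X \<subseteq> carrier (free_module R C)"
  shows "submodule (free_span R X) R (free_module R C)"
proof -
  interpret F: module R "free_module R C" by (rule module_free_module[OF assms(1)])
  have "free_span R X \<subseteq> carrier (free_module R C)"
    by (rule free_span_subset_submodule[OF F.carrier_is_submodule assms(2)])
  then show ?thesis
    by (intro F.submodule_smult_closedI) (auto intro: free_span.intros)
qed

definition lin_ext :: "('r, 'x) ring_scheme \<Rightarrow> ('r, 'e) module \<Rightarrow> ('a \<Rightarrow> 'e) \<Rightarrow> ('a \<Rightarrow> 'r) \<Rightarrow> 'e" where
  "lin_ext R E F v = (\<Oplus>\<^bsub>E\<^esub>p\<in>supp R v. v p \<odot>\<^bsub>E\<^esub> F p)"

lemma lin_ext_eq_finsum: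
  assumes E: "module R E" and F: "F \<in> C \<rightarrow> carrier E" and v: "v \<in> carrier (free_module R C)"
    and A: "finite A" "supp R v \<subseteq> A" "A \<subseteq> C"
  shows "lin_ext R E F v = (\<Oplus>\<^bsub>E\<^esub>p\<in>A. v p \<odot>\<^bsub>E\<^esub> F p)"
proof -
  interpret E: module R E by fact
  have "F p \<in> carrier E" if "p \<in> A" for p using that A(3) F by blast
  then show ?thesis
    unfolding lin_ext_def
    by (intro E.add.finprod_mono_neutral_cong_left) (use A v in \<open>auto simp: supp_def\<close>)
qed

context
  fixes R :: "('r, 'x) ring_scheme" and E :: "('r, 'e) module" and F :: "'a \<Rightarrow> 'e" and C :: "'a set"
  assumes R: "cring R" and E: "module R E" and F: "F \<in> C \<rightarrow> carrier E"
begin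

interpretation E: module R E by (rule E)
interpretation T: module R "free_module R C" by (rule module_free_module[OF R])

lemma lin_ext_closed: "lin_ext R E F v \<in> carrier E" if "v \<in> carrier (free_module R C)"
  using that F unfolding lin_ext_def by (intro E.finsum_closed) (auto simp: supp_def)

lemma lin_ext_add:
  assumes v: "v \<in> carrier (free_module R C)" and w: "w \<in> carrier (free_module R C)"
  shows "lin_ext R E F (v \<oplus>\<^bsub>free_module R C\<^esub> w) = lin_ext R E F v \<oplus>\<^bsub>E\<^esub> lin_ext R E F w"
proof -
  let ?A = "supp R v \<union> supp R w"
  have A: "finite ?A" "?A \<subseteq> C" using v w by auto
  have FA: "F p \<in> carrier E" if "p \<in> ?A" for p using that A(2) F by blast
  have "supp R (v \<oplus>\<^bsub>free_module R C\<^esub> w) \<subseteq> ?A"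
    using supp_add_subset[OF E.R.ring_axioms, of v w] v w by simp
  then have "lin_ext R E F (v \<oplus>\<^bsub>free_module R C\<^esub> w) = (\<Oplus>\<^bsub>E\<^esub>p\<in>?A. (v p \<oplus>\<^bsub>R\<^esub> w p) \<odot>\<^bsub>E\<^esub> F p)"
    using lin_ext_eq_finsum[OF E F T.add.m_closed[OF v w] A(1) _ A(2)] by simp
  also have "\<dots> = (\<Oplus>\<^bsub>E\<^esub>p\<in>?A. v p \<odot>\<^bsub>E\<^esub> F p \<oplus>\<^bsub>E\<^esub> w p \<odot>\<^bsub>E\<^esub> F p)"
    by (rule E.finsum_cong') (use v w FA in \<open>auto simp: E.smult_l_distr\<close>)
  also have "\<dots> = lin_ext R E F v \<oplus>\<^bsub>E\<^esub> lin_ext R E F w"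
    using lin_ext_eq_finsum[OF E F v A(1) _ A(2)] lin_ext_eq_finsum[OF E F w A(1) _ A(2)] v w FA
    by (simp add: E.finsum_addf)
  finally show ?thesis .
qed

lemma lin_ext_smult:
  assumes a: "a \<in> carrier R" and v: "v \<in> carrier (free_module R C)"
  shows "lin_ext R E F (a \<odot>\<^bsub>free_module R C\<^esub> v) = a \<odot>\<^bsub>E\<^esub> lin_ext R E F v"
proof -
  have A: "finite (supp R v)" "supp R v \<subseteq> C" using v by auto
  have FA: "F p \<in> carrier E" if "p \<in> supp R v" for p using that A(2) F by blast
  have "supp R (a \<odot>\<^bsub>free_module R C\<^esub> v) \<subseteq> supp R v"
    using supp_smult_subset[OF E.R.ring_axioms a, of v] v by simp
  then have "lin_ext R E F (a \<odot>\<^bsub>free_module R C\<^esub> v) = (\<Oplus>\<^bsub>E\<^esub>p\<in>supp R v. (a \<otimes>\<^bsub>R\<^esub> v p) \<odot>\<^bsub>E\<^esub> F p)"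
    using lin_ext_eq_finsum[OF E F T.smult_closed[OF a v] A(1) _ A(2)] by simp
  also have "\<dots> = (\<Oplus>\<^bsub>E\<^esub>p\<in>supp R v. a \<odot>\<^bsub>E\<^esub> (v p \<odot>\<^bsub>E\<^esub> F p))"
    by (rule E.finsum_cong') (use a v FA in \<open>auto simp: E.smult_assoc1\<close>)
  also have "\<dots> = a \<odot>\<^bsub>E\<^esub> lin_ext R E F v"
    unfolding lin_ext_def using a v A FA by (intro E.finsum_smult_ldistr[symmetric]) auto
  finally show ?thesis .
qed

lemma lin_ext_hom:
  "restrict (lin_ext R E F) (carrier (free_module R C)) \<in> hom_R R (free_module R C) E"
proof (rule hom_RI)
  fix v w assume v: "v \<in> carrier (free_module R C)" and w: "w \<in> carrier (free_module R C)"
  show "restrict (lin_ext R E F) (carrier (free_module R C)) (v \<oplus>\<^bsub>free_module R C\<^esub> w) =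
      restrict (lin_ext R E F) (carrier (free_module R C)) v \<oplus>\<^bsub>E\<^esub>
      restrict (lin_ext R E F) (carrier (free_module R C)) w"
    by (simp only: restrict_apply'[OF T.add.m_closed[OF v w]] restrict_apply'[OF v]
        restrict_apply'[OF w] lin_ext_add[OF v w])
next
  fix a v assume a: "a \<in> carrier R" and v: "v \<in> carrier (free_module R C)"
  show "restrict (lin_ext R E F) (carrier (free_module R C)) (a \<odot>\<^bsub>free_module R C\<^esub> v) =
      a \<odot>\<^bsub>E\<^esub> restrict (lin_ext R E F) (carrier (free_module R C)) v"
    by (simp only: restrict_apply'[OF T.smult_closed[OF a v]] restrict_apply'[OF v] lin_ext_smult[OF a v])
qed (simp_all add: lin_ext_closed)

end

lemma lin_ext_free_gen:
  assumes E: "module R E" and F: "F \<in> C \<rightarrow> carrier E" and lm: "(l, m) \<in> C"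
  shows "lin_ext R E F (free_gen R l m) = F (l, m)"
proof -
  interpret E: module R E by fact
  have "supp R (free_gen R l m) \<subseteq> {(l, m)}" by (auto simp: supp_def free_gen_def)
  then have "lin_ext R E F (free_gen R l m) = (\<Oplus>\<^bsub>E\<^esub>p\<in>{(l, m)}. free_gen R l m p \<odot>\<^bsub>E\<^esub> F p)"
    using lm free_gen_in_free_module[OF E.R.ring_axioms lm]
    by (intro lin_ext_eq_finsum[OF E F]) auto
  also have "\<dots> = F (l, m)"
    using E.finsum_insert[of "{}" "(l, m)" "\<lambda>p. free_gen R l m p \<odot>\<^bsub>E\<^esub> F p"] lm F
    by (simp add: free_gen_def Pi_iff)
  finally show ?thesis .
qed

context
  fixes R :: "('r, 'x) ring_scheme" and E :: "('r, 'e) module" and C :: "'a set" and \<phi>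
  assumes E: "module R E" and \<phi>: "\<phi> \<in> hom_R R (free_module R C) E"
begin

interpretation E: module R E by (rule E)
interpretation T: module R "free_module R C" by (rule module_free_module[OF E.R.is_cring])

lemma hom_free_module_diff_eq_zero_iff:
  assumes "u \<in> carrier (free_module R C)" "v \<in> carrier (free_module R C)"
  shows "\<phi> (\<lambda>p. u p \<ominus>\<^bsub>R\<^esub> v p) = \<zero>\<^bsub>E\<^esub> \<longleftrightarrow> \<phi> u = \<phi> v"
  using assms hom_R_minus[OF T.module_axioms E \<phi>, of u v] hom_R_closed[OF \<phi>]
  by (simp add: free_module_minus[OF E.R.is_cring] E.minus_eq_zero_iff)

lemma hom_free_module_diff3_eq_zero_iff:
  assumes "u \<in> carrier (free_module R C)" "v \<in> carrier (free_module R C)" "w \<in> carrier (free_module R C)"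
  shows "\<phi> (\<lambda>p. u p \<ominus>\<^bsub>R\<^esub> v p \<ominus>\<^bsub>R\<^esub> w p) = \<zero>\<^bsub>E\<^esub> \<longleftrightarrow> \<phi> u = \<phi> v \<oplus>\<^bsub>E\<^esub> \<phi> w"
proof -
  have "(\<lambda>p. u p \<ominus>\<^bsub>R\<^esub> v p \<ominus>\<^bsub>R\<^esub> w p) = (\<lambda>p. u p \<ominus>\<^bsub>R\<^esub> (v \<oplus>\<^bsub>free_module R C\<^esub> w) p)"
    using assms by (auto simp: E.R.minus_add a_minus_def E.R.a_ac)
  then show ?thesis
    using hom_free_module_diff_eq_zero_iff[OF assms(1) T.add.m_closed[OF assms(2,3)]]
      hom_R_add[OF \<phi> assms(2,3)] by simp
qed

lemma hom_free_module_diff_smult_eq_zero_iff: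
  assumes "a \<in> carrier R" "u \<in> carrier (free_module R C)" "v \<in> carrier (free_module R C)"
  shows "\<phi> (\<lambda>p. u p \<ominus>\<^bsub>R\<^esub> a \<otimes>\<^bsub>R\<^esub> v p) = \<zero>\<^bsub>E\<^esub> \<longleftrightarrow> \<phi> u = a \<odot>\<^bsub>E\<^esub> \<phi> v"
  using hom_free_module_diff_eq_zero_iff[OF assms(2) T.smult_closed[OF assms(1,3)]]
    hom_R_smult[OF \<phi> assms(1,3)] by simp

end

section \<open>Bilinear maps and the image of the tensor product\<close>

definition bilinear_map ::
  "('r, 'x) ring_scheme \<Rightarrow> ('r, 'l) module \<Rightarrow> ('r, 'm) module \<Rightarrow> ('r, 'e) module \<Rightarrow> ('l \<Rightarrow> 'm \<Rightarrow> 'e) \<Rightarrow> bool"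
  where
  "bilinear_map R L M E B \<longleftrightarrow>
     (\<forall>l\<in>carrier L. \<forall>m\<in>carrier M. B l m \<in> carrier E) \<and>
     (\<forall>l\<in>carrier L. \<forall>l'\<in>carrier L. \<forall>m\<in>carrier M. B (l \<oplus>\<^bsub>L\<^esub> l') m = B l m \<oplus>\<^bsub>E\<^esub> B l' m) \<and>
     (\<forall>l\<in>carrier L. \<forall>m\<in>carrier M. \<forall>m'\<in>carrier M. B l (m \<oplus>\<^bsub>M\<^esub> m') = B l m \<oplus>\<^bsub>E\<^esub> B l m') \<and>
     (\<forall>a\<in>carrier R. \<forall>l\<in>carrier L. \<forall>m\<in>carrier M. B (a \<odot>\<^bsub>L\<^esub> l) m = a \<odot>\<^bsub>E\<^esub> B l m) \<and>
     (\<forall>a\<in>carrier R. \<forall>l\<in>carrier L. \<forall>m\<in>carrier M. B l (a \<odot>\<^bsub>M\<^esub> m) = a \<odot>\<^bsub>E\<^esub> B l m)"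

lemma tensor_relationsI:
  "l \<in> carrier L \<Longrightarrow> l' \<in> carrier L \<Longrightarrow> m \<in> carrier M \<Longrightarrow>
    (\<lambda>p. free_gen R (l \<oplus>\<^bsub>L\<^esub> l') m p \<ominus>\<^bsub>R\<^esub> free_gen R l m p \<ominus>\<^bsub>R\<^esub> free_gen R l' m p) \<in> tensor_relations R L M"
  "l \<in> carrier L \<Longrightarrow> m \<in> carrier M \<Longrightarrow> m' \<in> carrier M \<Longrightarrow>
    (\<lambda>p. free_gen R l (m \<oplus>\<^bsub>M\<^esub> m') p \<ominus>\<^bsub>R\<^esub> free_gen R l m p \<ominus>\<^bsub>R\<^esub> free_gen R l m' p) \<in> tensor_relations R L M"
  "a \<in> carrier R \<Longrightarrow> l \<in> carrier L \<Longrightarrow> m \<in> carrier M \<Longrightarrow>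
    (\<lambda>p. free_gen R (a \<odot>\<^bsub>L\<^esub> l) m p \<ominus>\<^bsub>R\<^esub> a \<otimes>\<^bsub>R\<^esub> free_gen R l m p) \<in> tensor_relations R L M"
  "a \<in> carrier R \<Longrightarrow> l \<in> carrier L \<Longrightarrow> m \<in> carrier M \<Longrightarrow>
    (\<lambda>p. free_gen R l (a \<odot>\<^bsub>M\<^esub> m) p \<ominus>\<^bsub>R\<^esub> a \<otimes>\<^bsub>R\<^esub> free_gen R l m p) \<in> tensor_relations R L M"
  unfolding tensor_relations_def by blast+

lemma tensor_relationsE:
  assumes "r \<in> tensor_relations R L M"
  obtains (add_left) l l' m where "l \<in> carrier L" "l' \<in> carrier L" "m \<in> carrier M"
    "r = (\<lambda>p. free_gen R (l \<oplus>\<^bsub>L\<^esub> l') m p \<ominus>\<^bsub>R\<^esub> free_gen R l m p \<ominus>\<^bsub>R\<^esub> free_gen R l' m p)"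
  | (add_right) l m m' where "l \<in> carrier L" "m \<in> carrier M" "m' \<in> carrier M"
    "r = (\<lambda>p. free_gen R l (m \<oplus>\<^bsub>M\<^esub> m') p \<ominus>\<^bsub>R\<^esub> free_gen R l m p \<ominus>\<^bsub>R\<^esub> free_gen R l m' p)"
  | (smult_left) a l m where "a \<in> carrier R" "l \<in> carrier L" "m \<in> carrier M"
    "r = (\<lambda>p. free_gen R (a \<odot>\<^bsub>L\<^esub> l) m p \<ominus>\<^bsub>R\<^esub> a \<otimes>\<^bsub>R\<^esub> free_gen R l m p)"
  | (smult_right) a l m where "a \<in> carrier R" "l \<in> carrier L" "m \<in> carrier M"
    "r = (\<lambda>p. free_gen R l (a \<odot>\<^bsub>M\<^esub> m) p \<ominus>\<^bsub>R\<^esub> a \<otimes>\<^bsub>R\<^esub> free_gen R l m p)"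
  using assms unfolding tensor_relations_def by blast

lemma hom_vanishes_on_tensor_relations_iff:
  assumes L: "module R L" and M: "module R M" and E: "module R E"
    and \<phi>: "\<phi> \<in> hom_R R (free_module R (carrier L \<times> carrier M)) E"
  shows "(\<forall>r\<in>tensor_relations R L M. \<phi> r = \<zero>\<^bsub>E\<^esub>) \<longleftrightarrow> bilinear_map R L M E (\<lambda>l m. \<phi> (free_gen R l m))"
proof -
  interpret E: module R E by fact
  interpret L: module R L by fact
  interpret M: module R M by fact
  have gen: "free_gen R l m \<in> carrier (free_module R (carrier L \<times> carrier M))"
    if "l \<in> carrier L" "m \<in> carrier M" for l m
    by (rule free_gen_in_free_module[OF E.R.ring_axioms]) (simp add: that)
  note diff3 = hom_free_module_diff3_eq_zero_iff[OF E \<phi> gen gen gen]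
  note diff_smult = hom_free_module_diff_smult_eq_zero_iff[OF E \<phi> _ gen gen]
  show ?thesis
  proof
    assume "\<forall>r\<in>tensor_relations R L M. \<phi> r = \<zero>\<^bsub>E\<^esub>"
    then show "bilinear_map R L M E (\<lambda>l m. \<phi> (free_gen R l m))"
      unfolding bilinear_map_def
      by (auto simp: hom_R_closed[OF \<phi> gen] diff3[symmetric] diff_smult[symmetric]
          intro: tensor_relationsI)
  next
    assume B: "bilinear_map R L M E (\<lambda>l m. \<phi> (free_gen R l m))"
    show "\<forall>r\<in>tensor_relations R L M. \<phi> r = \<zero>\<^bsub>E\<^esub>"
    proof
      fix r assume "r \<in> tensor_relations R L M"
      then show "\<phi> r = \<zero>\<^bsub>E\<^esub>"
        by (cases rule: tensor_relationsE) (use B in \<open>simp_all add: bilinear_map_def diff3 diff_smult\<close>)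
    qed
  qed
qed

lemma bilinear_map_cong:
  assumes "module R L" "module R M" "\<And>l m. l \<in> carrier L \<Longrightarrow> m \<in> carrier M \<Longrightarrow> B l m = B' l m"
  shows "bilinear_map R L M E B \<longleftrightarrow> bilinear_map R L M E B'"
proof -
  interpret L: module R L by fact
  interpret M: module R M by fact
  show ?thesis unfolding bilinear_map_def by (simp add: assms(3))
qed

lemma tensor_relations_subset:
  assumes "module R L" "module R M"
  shows "tensor_relations R L M \<subseteq> carrier (free_module R (carrier L \<times> carrier M))"
proof
  interpret L: module R L by fact
  interpret M: module R M by fact
  interpret T: module R "free_module R (carrier L \<times> carrier M)" by (rule module_free_module[OF L.R.is_cring])
  have gen: "free_gen R l m \<in> carrier (free_module R (carrier L \<times> carrier M))"
    if "l \<in> carrier L" "m \<in> carrier M" for l m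
    by (rule free_gen_in_free_module[OF L.R.ring_axioms]) (simp add: that)
  have diff: "(\<lambda>p. u p \<ominus>\<^bsub>R\<^esub> v p) \<in> carrier (free_module R (carrier L \<times> carrier M))"
    if "u \<in> carrier (free_module R (carrier L \<times> carrier M))" "v \<in> carrier (free_module R (carrier L \<times> carrier M))" for u v
    using T.minus_closed[OF that] free_module_minus[OF L.R.is_cring that] by simp
  fix r assume "r \<in> tensor_relations R L M"
  then show "r \<in> carrier (free_module R (carrier L \<times> carrier M))"
  proof (cases rule: tensor_relationsE)
    case (add_left l l' m)
    then show ?thesis using diff[OF diff[OF gen gen] gen] by simp
  next
    case (add_right l m m')
    then show ?thesis using diff[OF diff[OF gen gen] gen] by simp
  next
    case (smult_left a l m)
    then show ?thesis using diff[OF gen T.smult_closed[OF _ gen]] by simp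
  next
    case (smult_right a l m)
    then show ?thesis using diff[OF gen T.smult_closed[OF _ gen]] by simp
  qed
qed

text \<open>The universal property of \<open>L \<otimes> M / im(L \<otimes> N)\<close>, with the quotient left implicit.\<close>

lemma bilinear_map_vanishes_on_tensor_image:
  assumes L: "module R L" and M: "module R M" and E: "module R E" and N: "N \<subseteq> carrier M"
    and B: "bilinear_map R L M E B" and BN: "\<forall>l\<in>carrier L. \<forall>n\<in>N. B l n = \<zero>\<^bsub>E\<^esub>"
    and s: "s \<in> carrier L" and u: "u \<in> carrier M" and image: "in_tensor_image R L N M s u"
  shows "B s u = \<zero>\<^bsub>E\<^esub>"
proof -
  interpret E: module R E by fact
  let ?T = "free_module R (carrier L \<times> carrier M)"
  let ?F = "\<lambda>(l, m). B l m"
  let ?X = "tensor_relations R L M \<union> {free_gen R l n | l n. l \<in> carrier L \<and> n \<in> N}"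
  define \<Phi> where "\<Phi> = restrict (lin_ext R E ?F) (carrier ?T)"
  have F: "?F \<in> carrier L \<times> carrier M \<rightarrow> carrier E" using B unfolding bilinear_map_def by auto
  have \<Phi>: "\<Phi> \<in> hom_R R ?T E" unfolding \<Phi>_def by (rule lin_ext_hom[OF E.R.is_cring E F])
  have gen: "free_gen R l m \<in> carrier ?T" if "l \<in> carrier L" "m \<in> carrier M" for l m
    by (rule free_gen_in_free_module[OF E.R.ring_axioms]) (simp add: that)
  have \<Phi>_gen: "\<Phi> (free_gen R l m) = B l m" if "l \<in> carrier L" "m \<in> carrier M" for l m
    using restrict_apply'[OF gen[OF that], of "lin_ext R E ?F"] lin_ext_free_gen[OF E F, of l m] that
    unfolding \<Phi>_def by (simp del: free_module_simps)
  have "bilinear_map R L M E (\<lambda>l m. \<Phi> (free_gen R l m)) \<longleftrightarrow> bilinear_map R L M E B"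
    by (rule bilinear_map_cong[OF L M]) (rule \<Phi>_gen)
  then have rel: "\<forall>r\<in>tensor_relations R L M. \<Phi> r = \<zero>\<^bsub>E\<^esub>"
    using hom_vanishes_on_tensor_relations_iff[OF L M E \<Phi>] B by simp
  let ?K = "{v \<in> carrier ?T. \<Phi> v = \<zero>\<^bsub>E\<^esub>}"
  have "?X \<subseteq> ?K"
  proof
    fix r assume "r \<in> ?X"
    then consider "r \<in> tensor_relations R L M" | l n where "l \<in> carrier L" "n \<in> N" "r = free_gen R l n"
      by blast
    then show "r \<in> ?K"
    proof cases
      case 1
      then show ?thesis using rel tensor_relations_subset[OF L M] by blast
    next
      case 2
      then show ?thesis using gen[of l n] \<Phi>_gen[of l n] BN N by auto
    qed
  qed
  then have "free_span R ?X \<subseteq> ?K"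
    by (rule free_span_subset_submodule[OF hom_R_kernel_submodule[OF module_free_module[OF E.R.is_cring] E \<Phi>]])
  then have "free_gen R s u \<in> ?K" using image unfolding in_tensor_image_def by (rule subsetD)
  then have "\<Phi> (free_gen R s u) = \<zero>\<^bsub>E\<^esub>" by (simp del: free_module_simps)
  then show ?thesis using \<Phi>_gen[OF s u] by simp
qed

lemma not_in_tensor_image_bilinear_map:
  assumes L: "module R L" and M: "module R M" and E: "module R E" and N: "N \<subseteq> carrier M"
    and inj: "injective_module R E" and e0: "e0 \<in> carrier E" "e0 \<noteq> \<zero>\<^bsub>E\<^esub>"
    and ann: "\<And>I. ideal I R \<Longrightarrow> \<one>\<^bsub>R\<^esub> \<notin> I \<Longrightarrow> I \<subseteq> {a \<in> carrier R. a \<odot>\<^bsub>E\<^esub> e0 = \<zero>\<^bsub>E\<^esub>}"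
    and s: "s \<in> carrier L" and u: "u \<in> carrier M" and not_image: "\<not> in_tensor_image R L N M s u"
  obtains B where "bilinear_map R L M E B" "\<forall>l\<in>carrier L. \<forall>n\<in>N. B l n = \<zero>\<^bsub>E\<^esub>" "B s u \<noteq> \<zero>\<^bsub>E\<^esub>"
proof -
  interpret E: module R E by fact
  let ?T = "free_module R (carrier L \<times> carrier M)"
  let ?X = "tensor_relations R L M \<union> {free_gen R l n | l n. l \<in> carrier L \<and> n \<in> N}"
  interpret TE: module_pair R ?T E by (intro module_pair.intro module_free_module E.R.is_cring E)
  have gen: "free_gen R l m \<in> carrier ?T" if "l \<in> carrier L" "m \<in> carrier M" for l m
    by (rule free_gen_in_free_module[OF E.R.ring_axioms]) (simp add: that)
  have "?X \<subseteq> carrier ?T" using tensor_relations_subset[OF L M] gen N by auto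
  then have W: "submodule (free_span R ?X) R ?T" by (rule free_span_submodule[OF E.R.is_cring])
  have "free_gen R s u \<notin> free_span R ?X" using not_image unfolding in_tensor_image_def .
  from TE.injective_module_separating_hom[OF inj W gen[OF s u] this e0(1) ann]
  obtain \<phi> where \<phi>: "\<phi> \<in> hom_R R ?T E" "\<And>w. w \<in> free_span R ?X \<Longrightarrow> \<phi> w = \<zero>\<^bsub>E\<^esub>"
    and \<phi>_su: "\<phi> (free_gen R s u) = e0" by blast
  have \<phi>_X: "\<phi> r = \<zero>\<^bsub>E\<^esub>" if "r \<in> ?X" for r by (rule \<phi>(2)[OF free_span.gen[OF that]])
  have "bilinear_map R L M E (\<lambda>l m. \<phi> (free_gen R l m))"
    using hom_vanishes_on_tensor_relations_iff[OF L M E \<phi>(1)] \<phi>_X by simp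
  moreover have "\<forall>l\<in>carrier L. \<forall>n\<in>N. \<phi> (free_gen R l n) = \<zero>\<^bsub>E\<^esub>" by (intro ballI \<phi>_X) blast
  ultimately show ?thesis using that \<phi>_su e0(2) by simp
qed

lemma in_tensor_image_iff_bilinear_maps_vanish:
  assumes L: "module R L" and M: "module R M" and E: "module R E" and N: "N \<subseteq> carrier M"
    and inj: "injective_module R E" and e0: "e0 \<in> carrier E" "e0 \<noteq> \<zero>\<^bsub>E\<^esub>"
    and ann: "\<And>I. ideal I R \<Longrightarrow> \<one>\<^bsub>R\<^esub> \<notin> I \<Longrightarrow> I \<subseteq> {a \<in> carrier R. a \<odot>\<^bsub>E\<^esub> e0 = \<zero>\<^bsub>E\<^esub>}"
    and s: "s \<in> carrier L" and u: "u \<in> carrier M"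
  shows "in_tensor_image R L N M s u \<longleftrightarrow>
    (\<forall>B. bilinear_map R L M E B \<and> (\<forall>l\<in>carrier L. \<forall>n\<in>N. B l n = \<zero>\<^bsub>E\<^esub>) \<longrightarrow> B s u = \<zero>\<^bsub>E\<^esub>)"
proof
  assume "in_tensor_image R L N M s u"
  then show "\<forall>B. bilinear_map R L M E B \<and> (\<forall>l\<in>carrier L. \<forall>n\<in>N. B l n = \<zero>\<^bsub>E\<^esub>) \<longrightarrow> B s u = \<zero>\<^bsub>E\<^esub>"
    using bilinear_map_vanishes_on_tensor_image[OF L M E N _ _ s u] by blast
next
  assume vanish: "\<forall>B. bilinear_map R L M E B \<and> (\<forall>l\<in>carrier L. \<forall>n\<in>N. B l n = \<zero>\<^bsub>E\<^esub>) \<longrightarrow> B s u = \<zero>\<^bsub>E\<^esub>"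
  show "in_tensor_image R L N M s u"
  proof (rule ccontr)
    assume "\<not> in_tensor_image R L N M s u"
    from not_in_tensor_image_bilinear_map[OF L M E N inj e0 ann s u this]
    obtain B where "bilinear_map R L M E B" "\<forall>l\<in>carrier L. \<forall>n\<in>N. B l n = \<zero>\<^bsub>E\<^esub>" "B s u \<noteq> \<zero>\<^bsub>E\<^esub>"
      by blast
    with vanish show False by blast
  qed
qed

section \<open>Homomorphisms into the Matlis dual of a quotient\<close>

abbreviation dual_quot_module :: "('r, 'x) ring_scheme \<Rightarrow> ('r, 'e) module \<Rightarrow> 'm set \<Rightarrow> ('r, 'm) module \<Rightarrow> ('r, 'm \<Rightarrow> 'e) module"
  where "dual_quot_module R E N M \<equiv> (mdual R E M)\<lparr>carrier := dual_quot R E N M\<rparr>"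

lemma dual_quot_module_eq:
  "dual_quot_module R E N M = function_module E (carrier M) (dual_quot R E N M)"
  by (simp add: mdual_def function_module_def)

lemma trace_SL_generator:
  "f \<in> hom_R R L (M\<lparr>carrier := N\<rparr>) \<Longrightarrow> s \<in> S \<Longrightarrow> f s \<in> trace_SL R S L N M"
  unfolding trace_SL_def submod_gen_def by blast

lemma trace_SL_least:
  assumes "submodule H R (M\<lparr>carrier := N\<rparr>)"
    and "\<And>f s. f \<in> hom_R R L (M\<lparr>carrier := N\<rparr>) \<Longrightarrow> s \<in> S \<Longrightarrow> f s \<in> H"
  shows "trace_SL R S L N M \<subseteq> H"
  unfolding trace_SL_def submod_gen_def using assms by (intro Inter_lower) blast

context
  fixes R :: "('r, 'x) ring_scheme" and E :: "('r, 'e) module" and M :: "('r, 'm) module" and N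
  assumes E: "module R E" and M: "module R M" and N: "N \<subseteq> carrier M"
begin

interpretation E: module R E by (rule E)
interpretation M: module R M by (rule M)

lemma dual_quot_memI:
  assumes "g \<in> hom_R R M E" "\<And>n. n \<in> N \<Longrightarrow> g n = \<zero>\<^bsub>E\<^esub>"
  shows "g \<in> dual_quot R E N M"
  using assms unfolding dual_quot_def mdual_def by simp

lemma dual_quot_memD:
  assumes "g \<in> dual_quot R E N M"
  shows "g \<in> hom_R R M E" "\<And>n. n \<in> N \<Longrightarrow> g n = \<zero>\<^bsub>E\<^esub>"
  using assms unfolding dual_quot_def mdual_def by simp_all

lemma module_dual_quot_module: "module R (dual_quot_module R E N M)"
  unfolding dual_quot_module_eq
proof (rule module_function_module[OF E])
  show "dual_quot R E N M \<subseteq> extensional (carrier M)"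
    using hom_R_extensional[OF dual_quot_memD(1)] by blast
  show "g x \<in> carrier E" if "g \<in> dual_quot R E N M" "x \<in> carrier M" for g x
    by (rule hom_R_closed[OF dual_quot_memD(1)[OF that(1)] that(2)])
  show "(\<lambda>x\<in>carrier M. \<zero>\<^bsub>E\<^esub>) \<in> dual_quot R E N M"
    using N by (intro dual_quot_memI hom_RI) auto
next
  fix g h assume g: "g \<in> dual_quot R E N M" and h: "h \<in> dual_quot R E N M"
  note G = dual_quot_memD[OF g] and H = dual_quot_memD[OF h]
  have gc: "g x \<in> carrier E" and hc: "h x \<in> carrier E" if "x \<in> carrier M" for x
    using that hom_R_closed[OF G(1)] hom_R_closed[OF H(1)] by auto
  show "(\<lambda>x\<in>carrier M. g x \<oplus>\<^bsub>E\<^esub> h x) \<in> dual_quot R E N M"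
  proof (intro dual_quot_memI hom_RI)
    fix x y assume "x \<in> carrier M" "y \<in> carrier M"
    then show "(\<lambda>x\<in>carrier M. g x \<oplus>\<^bsub>E\<^esub> h x) (x \<oplus>\<^bsub>M\<^esub> y) =
        (\<lambda>x\<in>carrier M. g x \<oplus>\<^bsub>E\<^esub> h x) x \<oplus>\<^bsub>E\<^esub> (\<lambda>x\<in>carrier M. g x \<oplus>\<^bsub>E\<^esub> h x) y"
      using gc hc by (simp add: hom_R_add[OF G(1)] hom_R_add[OF H(1)] E.a_ac)
  next
    fix b x assume "b \<in> carrier R" "x \<in> carrier M"
    then show "(\<lambda>x\<in>carrier M. g x \<oplus>\<^bsub>E\<^esub> h x) (b \<odot>\<^bsub>M\<^esub> x) = b \<odot>\<^bsub>E\<^esub> (\<lambda>x\<in>carrier M. g x \<oplus>\<^bsub>E\<^esub> h x) x"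
      using gc hc by (simp add: hom_R_smult[OF G(1)] hom_R_smult[OF H(1)] E.smult_r_distr)
  next
    fix n assume "n \<in> N"
    then show "(\<lambda>x\<in>carrier M. g x \<oplus>\<^bsub>E\<^esub> h x) n = \<zero>\<^bsub>E\<^esub>" using G(2) H(2) N by auto
  qed (use gc hc in auto)
next
  fix a g assume a: "a \<in> carrier R" and g: "g \<in> dual_quot R E N M"
  note G = dual_quot_memD[OF g]
  have gc: "g x \<in> carrier E" if "x \<in> carrier M" for x using that hom_R_closed[OF G(1)] by auto
  show "(\<lambda>x\<in>carrier M. a \<odot>\<^bsub>E\<^esub> g x) \<in> dual_quot R E N M"
  proof (intro dual_quot_memI hom_RI)
    fix x y assume "x \<in> carrier M" "y \<in> carrier M"
    then show "(\<lambda>x\<in>carrier M. a \<odot>\<^bsub>E\<^esub> g x) (x \<oplus>\<^bsub>M\<^esub> y) =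
        (\<lambda>x\<in>carrier M. a \<odot>\<^bsub>E\<^esub> g x) x \<oplus>\<^bsub>E\<^esub> (\<lambda>x\<in>carrier M. a \<odot>\<^bsub>E\<^esub> g x) y"
      using a gc by (simp add: hom_R_add[OF G(1)] E.smult_r_distr)
  next
    fix b x assume "b \<in> carrier R" "x \<in> carrier M"
    then show "(\<lambda>x\<in>carrier M. a \<odot>\<^bsub>E\<^esub> g x) (b \<odot>\<^bsub>M\<^esub> x) = b \<odot>\<^bsub>E\<^esub> (\<lambda>x\<in>carrier M. a \<odot>\<^bsub>E\<^esub> g x) x"
      using a gc by (simp add: hom_R_smult[OF G(1)] E.smult_assoc1[symmetric] E.R.m_comm)
  next
    fix n assume "n \<in> N"
    then show "(\<lambda>x\<in>carrier M. a \<odot>\<^bsub>E\<^esub> g x) n = \<zero>\<^bsub>E\<^esub>" using G(2) N a by auto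
  qed (use a gc in auto)
qed

lemma evaluation_hom_dual_quot_module:
  assumes u: "u \<in> carrier M"
  shows "(\<lambda>g\<in>dual_quot R E N M. g u) \<in> hom_R R (dual_quot_module R E N M) E"
proof -
  interpret D: module R "dual_quot_module R E N M" by (rule module_dual_quot_module)
  have D_simps: "carrier (dual_quot_module R E N M) = dual_quot R E N M"
    "f \<oplus>\<^bsub>dual_quot_module R E N M\<^esub> g = (\<lambda>x\<in>carrier M. f x \<oplus>\<^bsub>E\<^esub> g x)"
    "a \<odot>\<^bsub>dual_quot_module R E N M\<^esub> f = (\<lambda>x\<in>carrier M. a \<odot>\<^bsub>E\<^esub> f x)" for f g a
    by (simp_all add: dual_quot_module_eq)
  show ?thesis
  proof (rule hom_RI)
    show "(\<lambda>g\<in>dual_quot R E N M. g u) g \<in> carrier E" if "g \<in> carrier (dual_quot_module R E N M)" for g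
      using hom_R_closed[OF dual_quot_memD(1) u] that by (simp add: D_simps)
    show "(\<lambda>g\<in>dual_quot R E N M. g u) \<in> extensional (carrier (dual_quot_module R E N M))"
      by (simp add: D_simps)
    show "(\<lambda>g\<in>dual_quot R E N M. g u) (f \<oplus>\<^bsub>dual_quot_module R E N M\<^esub> g) =
        (\<lambda>g\<in>dual_quot R E N M. g u) f \<oplus>\<^bsub>E\<^esub> (\<lambda>g\<in>dual_quot R E N M. g u) g"
      if "f \<in> carrier (dual_quot_module R E N M)" "g \<in> carrier (dual_quot_module R E N M)" for f g
      using D.add.m_closed[OF that] that u by (simp add: D_simps mdual_def)
    show "(\<lambda>g\<in>dual_quot R E N M. g u) (a \<odot>\<^bsub>dual_quot_module R E N M\<^esub> f) =
        a \<odot>\<^bsub>E\<^esub> (\<lambda>g\<in>dual_quot R E N M. g u) f"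
      if "a \<in> carrier R" "f \<in> carrier (dual_quot_module R E N M)" for a f
      using D.smult_closed[OF that] that u by (simp add: D_simps mdual_def)
  qed
qed

context
  fixes L :: "('r, 'l) module"
  assumes L: "module R L"
begin

interpretation L: module R L by (rule L)

lemma hom_dual_quot_module_bilinear_map:
  assumes f: "f \<in> hom_R R L (dual_quot_module R E N M)"
  shows "bilinear_map R L M E f" "\<forall>l\<in>carrier L. \<forall>n\<in>N. f l n = \<zero>\<^bsub>E\<^esub>"
proof -
  have fl: "f l \<in> dual_quot R E N M" if "l \<in> carrier L" for l
    using hom_R_closed[OF f that] by simp
  have add: "f (l \<oplus>\<^bsub>L\<^esub> l') = (\<lambda>x\<in>carrier M. f l x \<oplus>\<^bsub>E\<^esub> f l' x)" if "l \<in> carrier L" "l' \<in> carrier L" for l l'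
    using hom_R_add[OF f that] by (simp add: mdual_def)
  have smult: "f (a \<odot>\<^bsub>L\<^esub> l) = (\<lambda>x\<in>carrier M. a \<odot>\<^bsub>E\<^esub> f l x)" if "a \<in> carrier R" "l \<in> carrier L" for a l
    using hom_R_smult[OF f that] by (simp add: mdual_def)
  have flh: "f l \<in> hom_R R M E" if "l \<in> carrier L" for l by (rule dual_quot_memD(1)[OF fl[OF that]])
  show "bilinear_map R L M E f"
    unfolding bilinear_map_def
    by (simp add: add smult hom_R_closed[OF flh] hom_R_add[OF flh] hom_R_smult[OF flh])
  show "\<forall>l\<in>carrier L. \<forall>n\<in>N. f l n = \<zero>\<^bsub>E\<^esub>" using fl dual_quot_memD(2) by blast
qed

lemma bilinear_map_hom_dual_quot_module:
  assumes B: "bilinear_map R L M E B" and BN: "\<forall>l\<in>carrier L. \<forall>n\<in>N. B l n = \<zero>\<^bsub>E\<^esub>"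
  shows "(\<lambda>l\<in>carrier L. \<lambda>m\<in>carrier M. B l m) \<in> hom_R R L (dual_quot_module R E N M)"
proof (rule hom_RI)
  fix l assume l: "l \<in> carrier L"
  show "(\<lambda>l\<in>carrier L. \<lambda>m\<in>carrier M. B l m) l \<in> carrier (dual_quot_module R E N M)"
    using l B BN N unfolding bilinear_map_def by (auto intro!: dual_quot_memI hom_RI)
qed (use B in \<open>auto simp: bilinear_map_def mdual_def intro!: restrict_ext\<close>)

lemma hom_dual_quot_module_vanish_iff:
  assumes s: "s \<in> carrier L" and u: "u \<in> carrier M"
  shows "(\<forall>f\<in>hom_R R L (dual_quot_module R E N M). f s u = \<zero>\<^bsub>E\<^esub>) \<longleftrightarrow>
    (\<forall>B. bilinear_map R L M E B \<and> (\<forall>l\<in>carrier L. \<forall>n\<in>N. B l n = \<zero>\<^bsub>E\<^esub>) \<longrightarrow> B s u = \<zero>\<^bsub>E\<^esub>)"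
proof
  assume "\<forall>f\<in>hom_R R L (dual_quot_module R E N M). f s u = \<zero>\<^bsub>E\<^esub>"
  then show "\<forall>B. bilinear_map R L M E B \<and> (\<forall>l\<in>carrier L. \<forall>n\<in>N. B l n = \<zero>\<^bsub>E\<^esub>) \<longrightarrow> B s u = \<zero>\<^bsub>E\<^esub>"
    using bilinear_map_hom_dual_quot_module s u by fastforce
next
  assume "\<forall>B. bilinear_map R L M E B \<and> (\<forall>l\<in>carrier L. \<forall>n\<in>N. B l n = \<zero>\<^bsub>E\<^esub>) \<longrightarrow> B s u = \<zero>\<^bsub>E\<^esub>"
  then show "\<forall>f\<in>hom_R R L (dual_quot_module R E N M). f s u = \<zero>\<^bsub>E\<^esub>"
    using hom_dual_quot_module_bilinear_map by blast
qed

end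

text \<open>\<open>S \<subseteq> carrier L\<close> matters: for \<open>s \<notin> carrier L\<close> the extensional \<open>f\<close> has \<open>f s = undefined\<close>,
  which lies in no submodule, and the trace degenerates to \<open>UNIV\<close>.\<close>

lemma smile_dual_trace_SL:
  assumes S: "S \<subseteq> carrier L"
  shows "smile_dual R E (trace_SL R S L) N M =
    {u \<in> carrier M. \<forall>s\<in>S. \<forall>f\<in>hom_R R L (dual_quot_module R E N M). f s u = \<zero>\<^bsub>E\<^esub>}"
proof (intro equalityI subsetI)
  fix u assume "u \<in> smile_dual R E (trace_SL R S L) N M"
  then have u: "u \<in> carrier M"
    and vanish: "\<And>g. g \<in> trace_SL R S L (dual_quot R E N M) (mdual R E M) \<Longrightarrow> g u = \<zero>\<^bsub>E\<^esub>"
    unfolding smile_dual_def by auto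
  have "f s u = \<zero>\<^bsub>E\<^esub>" if "f \<in> hom_R R L (dual_quot_module R E N M)" "s \<in> S" for f s
    by (rule vanish[OF trace_SL_generator[OF that]])
  with u show "u \<in> {u \<in> carrier M. \<forall>s\<in>S. \<forall>f\<in>hom_R R L (dual_quot_module R E N M). f s u = \<zero>\<^bsub>E\<^esub>}"
    by blast
next
  fix u assume "u \<in> {u \<in> carrier M. \<forall>s\<in>S. \<forall>f\<in>hom_R R L (dual_quot_module R E N M). f s u = \<zero>\<^bsub>E\<^esub>}"
  then have u: "u \<in> carrier M"
    and gens: "\<And>f s. f \<in> hom_R R L (dual_quot_module R E N M) \<Longrightarrow> s \<in> S \<Longrightarrow> f s u = \<zero>\<^bsub>E\<^esub>" by auto
  let ?ev = "\<lambda>g\<in>dual_quot R E N M. g u"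
  have "{g \<in> carrier (dual_quot_module R E N M). ?ev g = \<zero>\<^bsub>E\<^esub>} = {g \<in> dual_quot R E N M. g u = \<zero>\<^bsub>E\<^esub>}"
    by auto
  then have K: "submodule {g \<in> dual_quot R E N M. g u = \<zero>\<^bsub>E\<^esub>} R (dual_quot_module R E N M)"
    using hom_R_kernel_submodule[OF module_dual_quot_module E evaluation_hom_dual_quot_module[OF u]] by simp
  have "trace_SL R S L (dual_quot R E N M) (mdual R E M) \<subseteq> {g \<in> dual_quot R E N M. g u = \<zero>\<^bsub>E\<^esub>}"
    by (rule trace_SL_least[OF K]) (use gens hom_R_closed S in force)
  then show "u \<in> smile_dual R E (trace_SL R S L) N M"
    using u by (auto simp: smile_dual_def)
qed

end

theorem theorem7p17:
  fixes R :: "('r, 'x) ring_scheme"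
    and E :: "('r, 'e) module"
    and L :: "('r, 'l) module"
    and M :: "('r, 'm) module"
    and S :: "'l set"
    and N :: "'m set"
  assumes "complete_local_noetherian R"
    and "injective_hull_residue R E"
    and "module R L"
    and "S \<subseteq> carrier L"
    and "submodule N R M"
    and "matlis_dualizable R E M"
    and "matlis_dualizable R E (M\<lparr>carrier := N\<rparr>)"
  shows "smile_dual R E (\<lambda>N' M'. trace_SL R S L N' M') N M = cl_SL R S L N M"
proof -
  have local: "local_ring R" and noetherian: "noetherian_ring R"
    using assms(1) unfolding complete_local_noetherian_def by auto
  have E: "module R E" and inj: "injective_module R E"
    using assms(2) unfolding injective_hull_residue_def by auto
  obtain e0 where e0: "e0 \<in> carrier E" "e0 \<noteq> \<zero>\<^bsub>E\<^esub>"
    and ann: "\<And>I. ideal I R \<Longrightarrow> \<one>\<^bsub>R\<^esub> \<notin> I \<Longrightarrow> I \<subseteq> {a \<in> carrier R. a \<odot>\<^bsub>E\<^esub> e0 = \<zero>\<^bsub>E\<^esub>}"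
    by (rule injective_hull_residue_element[OF local noetherian assms(2)], rule that)
  have M: "module R M" using assms(6) unfolding matlis_dualizable_def by auto
  have N: "N \<subseteq> carrier M" using module.submoduleE(1)[OF M assms(5)] .
  have "smile_dual R E (\<lambda>N' M'. trace_SL R S L N' M') N M =
      {u \<in> carrier M. \<forall>s\<in>S. \<forall>f\<in>hom_R R L (dual_quot_module R E N M). f s u = \<zero>\<^bsub>E\<^esub>}"
    using smile_dual_trace_SL[OF E M N assms(4)] by simp
  also have "\<dots> = {u \<in> carrier M. \<forall>s\<in>S. in_tensor_image R L N M s u}"
  proof (intro Collect_cong conj_cong refl ball_cong)
    fix u s assume u: "u \<in> carrier M" and "s \<in> S"
    then have s: "s \<in> carrier L" using assms(4) by blast
    show "(\<forall>f\<in>hom_R R L (dual_quot_module R E N M). f s u = \<zero>\<^bsub>E\<^esub>) \<longleftrightarrow> in_tensor_image R L N M s u"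
      using hom_dual_quot_module_vanish_iff[OF E M N assms(3) s u]
        in_tensor_image_iff_bilinear_maps_vanish[OF assms(3) M E N inj e0 ann s u] by simp
  qed
  also have "\<dots> = cl_SL R S L N M" unfolding cl_SL_def ..
  finally show ?thesis .
qed

end
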